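(* Let $\{Y_t\}$ be the unique stationary solution $Y_t=\sum_{i\ge0}a_i\epsilon_{t-i}$ of $Y_t=\sum_{i=1}^d\phi_iY_{t-i}+\epsilon_t$, with $1-\sum_i\phi_iz^i$ having roots outside the closed unit disk and iid innovations having a Lebesgue density and a finite $\delta$-moment for some $\delta>0$, $\epsilon_t$ independent of $\sigma\{Y_s,s\le t-1\}$. Fix $h\ge1$ and suppose $Y_t,\dots,Y_{t-n+1}$ are observed. Let $\widehat\phi=\widehat\phi(n)$ be an estimator with $\widehat\phi\to\phi$ in probability. With $\Phi=(\phi\ e_1\cdots e_{d-1})$, $\widehat\Phi=(\widehat\phi\ e_1\cdots e_{d-1})$, $\phi(h)=\Phi^he_1$, $\widehat\phi(h)=\widehat\Phi^he_1$, $Z_{t-k}=(Y_{t-k},\dots,Y_{t-k-d+1})^\top$, $\widehat Y_{t+h}(\phi)=\phi(h)^\top Z_t$, $\widehat Y_{t+h}(\widehat\phi)=\widehat\phi(h)^\top Z_t$, define \[ \widehat U_{t+h}=\frac{1}{n-d+1}\sum_{k=0}^{n-d}\mathbb{I}\big(\widehat\phi(h)^\top Z_{t-k}\le \widehat Y_{t+h}(\widehat\phi)\big),\qquad U^*_{t+h}=\mathbb{P}_Z\big(\phi(h)^\top Z\le \widehat Y_{t+h}(\phi)\big), \] where $Z$ is distributed as $Z_t$ and independent of $(Z_t,\widehat\phi)$. If $\widehat Y_{t+h}(\phi)$ has a density with respect to Lebesgue measure, then $\widehat U_{t+h}\to U^*_{t+h}$ in probability as $n\to\infty$.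
   Context: $\mathbb{P}_Z$ denotes probability with respect to $Z$ only (i.e. conditional on everything else); $e_1,\dots,e_{d-1}$ are the first standard basis vectors of $\mathbb{R}^d$. *)

theory Defs
  imports "HOL-Probability.Probability" "HOL-Computational_Algebra.Formal_Power_Series"
begin

text \<open>Vectors in R^d are represented as functions nat => real, only indices 0..d-1 matter.
  Index i (0-based) corresponds to the paper's index i+1; so phi i = phi_(i+1).\<close>

text \<open>Phi = (phi e_1 ... e_(d-1)): column 0 is phi, column j (j>=1) is the basis vector
  with 1 at (0-based) position j-1.\<close>
definition companion_mat :: "(nat \<Rightarrow> real) \<Rightarrow> nat \<Rightarrow> nat \<Rightarrow> real" where
  "companion_mat phi i j = (if j = 0 then phi i else if i = j - 1 then 1 else 0)"

definition mat_vec :: "nat \<Rightarrow> (nat \<Rightarrow> nat \<Rightarrow> real) \<Rightarrow> (nat \<Rightarrow> real) \<Rightarrow> nat \<Rightarrow> real" where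
  "mat_vec d A v = (\<lambda>i. \<Sum>j<d. A i j * v j)"

definition unit_vec :: "nat \<Rightarrow> nat \<Rightarrow> real" where
  "unit_vec k = (\<lambda>i. if i = k then 1 else 0)"

definition pred_coef :: "nat \<Rightarrow> (nat \<Rightarrow> real) \<Rightarrow> nat \<Rightarrow> nat \<Rightarrow> real" where
  "pred_coef d phi h = (mat_vec d (companion_mat phi) ^^ h) (unit_vec 0)"

definition lin_pred :: "nat \<Rightarrow> (nat \<Rightarrow> real) \<Rightarrow> (int \<Rightarrow> 'a \<Rightarrow> real) \<Rightarrow> int \<Rightarrow> 'a \<Rightarrow> real" where
  "lin_pred d c Y s \<omega> = (\<Sum>i<d. c i * Y (s - int i) \<omega>)"

text \<open>MA(infinity) coefficients a_i: coefficients of 1 / (1 - sum_(i=1)^d phi_i z^i)\<close>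
definition ma_coef :: "nat \<Rightarrow> (nat \<Rightarrow> real) \<Rightarrow> nat \<Rightarrow> real" where
  "ma_coef d phi = fps_nth (inverse (1 - (\<Sum>i<d. fps_const (phi i) * fps_X ^ Suc i)))"

definition U_hat :: "nat \<Rightarrow> nat \<Rightarrow> (nat \<Rightarrow> 'a \<Rightarrow> nat \<Rightarrow> real) \<Rightarrow> (int \<Rightarrow> 'a \<Rightarrow> real) \<Rightarrow> int \<Rightarrow> nat \<Rightarrow> 'a \<Rightarrow> real" where
  "U_hat d h phihat Y t n \<omega> =
     (1 / real (n - d + 1)) *
     (\<Sum>k\<in>{0..n - d}. if lin_pred d (pred_coef d (phihat n \<omega>) h) Y (t - int k) \<omega>
                          \<le> lin_pred d (pred_coef d (phihat n \<omega>) h) Y t \<omega> then 1 else 0)"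

definition U_star :: "'a measure \<Rightarrow> nat \<Rightarrow> nat \<Rightarrow> (nat \<Rightarrow> real) \<Rightarrow> (int \<Rightarrow> 'a \<Rightarrow> real) \<Rightarrow> int \<Rightarrow> 'a \<Rightarrow> real" where
  "U_star M d h phi Y t \<omega> =
     measure (distr M (PiM {..<d} (\<lambda>_. borel)) (\<lambda>\<omega>'. \<lambda>i\<in>{..<d}. Y (t - int i) \<omega>'))
       {z \<in> space (PiM {..<d} (\<lambda>_. (borel :: real measure))).
          (\<Sum>i<d. pred_coef d phi h i * z i) \<le> lin_pred d (pred_coef d phi h) Y t \<omega>}"

definition conv_prob :: "'a measure \<Rightarrow> (nat \<Rightarrow> 'a \<Rightarrow> real) \<Rightarrow> ('a \<Rightarrow> real) \<Rightarrow> bool" where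
  "conv_prob M X L \<longleftrightarrow>
     (\<forall>e>0. (\<lambda>n. measure M {\<omega> \<in> space M. e < \<bar>X n \<omega> - L \<omega>\<bar>}) \<longlonglongrightarrow> 0)"

definition conv_prob_vec :: "'a measure \<Rightarrow> nat \<Rightarrow> (nat \<Rightarrow> 'a \<Rightarrow> nat \<Rightarrow> real) \<Rightarrow> (nat \<Rightarrow> real) \<Rightarrow> bool" where
  "conv_prob_vec M d X c \<longleftrightarrow>
     (\<forall>e>0. (\<lambda>n. measure M {\<omega> \<in> space M. e < sqrt (\<Sum>i<d. (X n \<omega> i - c i)^2)}) \<longlonglongrightarrow> 0)"

end

theory Submission
  imports Defs
begin

text \<open>
  Write c = phi(h) and F for the distribution function of c' Z_t, so that U*_(t+h) = F(c' Z_t).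
  Since Y is a fixed measurable functional of the shifted iid innovation sequence, it is strictly
  stationary. Truncating the MA(infinity) series at lag m makes the indicators of
  c' Z_(t-k) <= y (m+d)-dependent, up to an L1 error that vanishes as m grows because F has no
  atoms; a second-moment bound then gives a weak law of large numbers: the empirical distribution
  function of the c' Z_(t-k) converges in probability to F at every point, hence, by monotonicity
  and a finite grid, uniformly on compact intervals. Replacing c by the consistent estimate
  phihat(h) moves each c' Z_(t-k) by at most |phihat(h) - c|_1 |Z_(t-k)|_1, so Uhat_(t+h) is
  sandwiched between the empirical distribution function at c' Z_t - r and at c' Z_t + r, up to
  the fraction of large |Z_(t-k)|_1, which is small by Markov's inequality.

  Only the MA(infinity) representation with iid innovations, the consistency of the estimator and
  the density of Yhat_(t+h)(phi) are used; the root condition, the moment and density conditions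
  on the innovations, the AR recursion and the independence of eps_t from the past are what
  guarantee that representation in the paper.
\<close>

lemma tendsto_zero_if_eventually_le_small:
  fixes x :: "nat \<Rightarrow> real"
  assumes nonneg: "\<And>n. 0 \<le> x n"
    and small: "\<And>\<zeta>. \<zeta> > 0 \<Longrightarrow> \<exists>b. b \<longlonglongrightarrow> 0 \<and> (\<forall>\<^sub>F n in sequentially. x n \<le> \<zeta> + b n)"
  shows "x \<longlonglongrightarrow> 0"
proof (rule order_tendstoI)
  fix a :: real assume "0 < a"
  then obtain b where "b \<longlonglongrightarrow> 0" and le: "\<forall>\<^sub>F n in sequentially. x n \<le> a / 2 + b n"
    using small[of "a / 2"] by auto
  then have "\<forall>\<^sub>F n in sequentially. b n < a / 2"
    using \<open>0 < a\<close> by (intro order_tendstoD(2)) auto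
  with le show "\<forall>\<^sub>F n in sequentially. x n < a"
    by eventually_elim auto
qed (metis always_eventually nonneg order_less_le_trans)

lemma tendsto_zero_of_le_add_inverse:
  fixes x a B :: "nat \<Rightarrow> real"
  assumes "\<And>N. 0 \<le> x N" "\<And>m N. 0 < N \<Longrightarrow> x N \<le> a m + B m / real N" "a \<longlonglongrightarrow> 0"
  shows "x \<longlonglongrightarrow> 0"
proof (rule tendsto_zero_if_eventually_le_small[OF assms(1)])
  fix \<zeta> :: real assume "0 < \<zeta>"
  then have "\<forall>\<^sub>F m in sequentially. a m < \<zeta>"
    using \<open>a \<longlonglongrightarrow> 0\<close> by (rule order_tendstoD(2)[rotated])
  then obtain m where "a m < \<zeta>"
    by (meson eventually_sequentially order.refl)
  have lim: "(\<lambda>N. B m * inverse (real N)) \<longlonglongrightarrow> B m * 0"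
    by (intro tendsto_intros tendsto_inverse_0_at_top filterlim_real_sequentially)
  have "x N \<le> \<zeta> + B m * inverse (real N)" if "0 < N" for N
    using assms(2)[OF that, of m] \<open>a m < \<zeta>\<close> by (simp add: divide_inverse)
  then have "\<forall>\<^sub>F N in sequentially. x N \<le> \<zeta> + B m * inverse (real N)"
    by (rule eventually_mono[OF eventually_gt_at_top[of 0]])
  with lim show "\<exists>b. b \<longlonglongrightarrow> 0 \<and> (\<forall>\<^sub>F N in sequentially. x N \<le> \<zeta> + b N)"
    by auto
qed

lemma tendsto_of_bool_le:
  fixes f :: "nat \<Rightarrow> real"
  assumes "f \<longlonglongrightarrow> x" "x \<noteq> y"
  shows "(\<lambda>m. of_bool (f m \<le> y) :: real) \<longlonglongrightarrow> of_bool (x \<le> y)"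
proof (cases "x < y")
  case True
  then have "\<forall>\<^sub>F m in sequentially. f m < y"
    by (rule order_tendstoD(2)[OF assms(1)])
  then show ?thesis
    using True by (intro tendsto_eventually) (auto elim: eventually_mono)
next
  case False
  then have "\<forall>\<^sub>F m in sequentially. y < f m"
    using assms(2) by (intro order_tendstoD(1)[OF assms(1)]) auto
  then show ?thesis
    using False assms(2) by (intro tendsto_eventually) (auto elim: eventually_mono)
qed

lemma conv_prob_cong_AE:
  assumes "AE \<omega> in M. \<forall>n. X n \<omega> = X' n \<omega>" "AE \<omega> in M. L \<omega> = L' \<omega>"
    and [measurable]: "\<And>n. X n \<in> borel_measurable M" "\<And>n. X' n \<in> borel_measurable M"
      "L \<in> borel_measurable M" "L' \<in> borel_measurable M"
  shows "conv_prob M X L \<longleftrightarrow> conv_prob M X' L'"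
proof -
  have "measure M {\<omega> \<in> space M. e < \<bar>X n \<omega> - L \<omega>\<bar>} = measure M {\<omega> \<in> space M. e < \<bar>X' n \<omega> - L' \<omega>\<bar>}"
    for e n
    using assms(1,2) by (intro measure_eq_AE) auto
  then show ?thesis
    unfolding conv_prob_def by simp
qed

lemma abs_integral_le_integral:
  fixes f g :: "'a \<Rightarrow> real"
  assumes "integrable M f" "integrable M g" "\<And>x. x \<in> space M \<Longrightarrow> \<bar>f x\<bar> \<le> g x"
  shows "\<bar>integral\<^sup>L M f\<bar> \<le> integral\<^sup>L M g"
proof -
  have "\<bar>integral\<^sup>L M f\<bar> \<le> (\<integral>x. \<bar>f x\<bar> \<partial>M)"
    using integral_norm_bound[of M f] by simp
  also have "\<dots> \<le> integral\<^sup>L M g"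
    using assms by (intro integral_mono) auto
  finally show ?thesis .
qed

lemma (in prob_space) integrable_unit_interval:
  fixes f :: "'a \<Rightarrow> real"
  assumes "f \<in> borel_measurable M" "\<And>x. x \<in> space M \<Longrightarrow> \<bar>f x\<bar> \<le> 1"
  shows "integrable M f"
  using assms by (intro integrable_const_bound[where B=1]) auto

lemma (in prob_space) tail_prob_less:
  assumes [measurable]: "f \<in> borel_measurable M" and "0 < p"
  obtains R :: nat where "prob {\<omega> \<in> space M. real R < f \<omega>} < p"
proof -
  have "(\<lambda>n. prob {\<omega> \<in> space M. real n < f \<omega>}) \<longlonglongrightarrow> prob (\<Inter>n. {\<omega> \<in> space M. real n < f \<omega>})"
    by (rule Lim_measure_decseq) (auto intro!: decseq_SucI simp: emeasure_eq_measure)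
  moreover have "(\<Inter>n. {\<omega> \<in> space M. real n < f \<omega>}) = {}"
    by auto (meson less_asym reals_Archimedean2)
  ultimately have "\<forall>\<^sub>F n in sequentially. prob {\<omega> \<in> space M. real n < f \<omega>} < p"
    using \<open>0 < p\<close> by (intro order_tendstoD(2)) auto
  then obtain R :: nat where "prob {\<omega> \<in> space M. real R < f \<omega>} < p"
    by (meson eventually_sequentially order.refl)
  then show thesis
    by (rule that)
qed

lemma (in prob_space) prob_eq_zero_of_distributed:
  assumes "distributed M lborel X f"
  shows "prob {\<omega> \<in> space M. X \<omega> = y} = 0"
proof -
  have [measurable]: "X \<in> borel_measurable M" "f \<in> borel_measurable lborel"
    and law: "distr M lborel X = density lborel f"
    using assms by (auto simp: distributed_def)
  have "AE x in lborel. x \<in> {y} \<longrightarrow> f x = 0"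
    using AE_lborel_singleton[of y] by eventually_elim auto
  then have "measure (distr M lborel X) {y} = 0"
    unfolding law by (simp add: null_sets_density_iff measure_eq_0_null_sets)
  then show ?thesis
    by (simp add: measure_distr vimage_def Int_def conj_commute)
qed

lemma (in prob_space) continuous_prob_le_of_no_atoms:
  fixes X :: "'a \<Rightarrow> real"
  assumes [measurable]: "X \<in> borel_measurable M"
    and no_atom: "\<And>y. prob {\<omega> \<in> space M. X \<omega> = y} = 0"
  shows "continuous_on UNIV (\<lambda>y. prob {\<omega> \<in> space M. X \<omega> \<le> y})"
proof -
  have "real_distribution (distr M borel X)"
    by simp
  then have isCont_cdf: "isCont (cdf (distr M borel X)) y \<longleftrightarrow> measure (distr M borel X) {y} = 0" for y
    by (intro finite_borel_measure.isCont_cdf real_distribution.finite_borel_measure_M)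
  have "prob {\<omega> \<in> space M. X \<omega> \<le> y} = cdf (distr M borel X) y"
    "prob {\<omega> \<in> space M. X \<omega> = y} = measure (distr M borel X) {y}" for y
    unfolding cdf_def by (simp_all add: measure_distr vimage_def Int_def conj_commute)
  then show ?thesis
    using no_atom isCont_cdf by (auto intro!: continuous_at_imp_continuous_on)
qed

section \<open>A weak law of large numbers for approximately dependent sequences\<close>

lemma (in prob_space) covariance_le_of_L1_approx:
  fixes X X' Z Z' :: "'a \<Rightarrow> real"
  assumes [measurable]: "X \<in> borel_measurable M" "X' \<in> borel_measurable M"
      "Z \<in> borel_measurable M" "Z' \<in> borel_measurable M"
    and unit: "\<And>x. x \<in> space M \<Longrightarrow> X x \<in> {0..1} \<and> X' x \<in> {0..1} \<and> Z x \<in> {0..1} \<and> Z' x \<in> {0..1}"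
    and mu: "mu \<in> {0..1}" "expectation X = mu"
    and approx: "expectation (\<lambda>x. \<bar>X x - Z x\<bar>) \<le> e" "expectation (\<lambda>x. \<bar>X' x - Z' x\<bar>) \<le> e"
    and uncorr: "expectation (\<lambda>x. Z x * Z' x) = expectation Z * expectation Z'"
  shows "\<bar>expectation (\<lambda>x. (X x - mu) * (X' x - mu))\<bar> \<le> 3 * e"
proof -
  have [simp]: "integrable M X" "integrable M X'" "integrable M Z" "integrable M Z'"
      "integrable M (\<lambda>x. Z x * Z' x)"
      "integrable M (\<lambda>x. \<bar>X x - Z x\<bar>)" "integrable M (\<lambda>x. \<bar>X' x - Z' x\<bar>)"
    by (auto intro!: integrable_unit_interval simp: abs_mult mult_le_one abs_le_iff dest!: unit)
  define R where "R x = (X x - Z x) * (X' x - mu) + (Z x - mu) * (X' x - Z' x)" for x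
  have R_le: "\<bar>R x\<bar> \<le> \<bar>X x - Z x\<bar> + \<bar>X' x - Z' x\<bar>" if "x \<in> space M" for x
  proof -
    have "\<bar>(X x - Z x) * (X' x - mu)\<bar> \<le> \<bar>X x - Z x\<bar>"
      "\<bar>(Z x - mu) * (X' x - Z' x)\<bar> \<le> \<bar>X' x - Z' x\<bar>"
      using unit[OF that] mu by (auto simp: abs_mult intro!: mult_left_le mult_left_le_one_le)
    then show ?thesis unfolding R_def by linarith
  qed
  have [measurable]: "R \<in> borel_measurable M"
    unfolding R_def by measurable
  have int_R: "integrable M R"
    by (rule Bochner_Integration.integrable_bound[where f="\<lambda>x. \<bar>X x - Z x\<bar> + \<bar>X' x - Z' x\<bar>"])
      (auto intro!: AE_I2 order_trans[OF R_le])
  have "expectation (\<lambda>x. (X x - mu) * (X' x - mu))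
      = expectation (\<lambda>x. Z x * Z' x - mu * Z' x - mu * Z x + mu\<^sup>2 + R x)"
    by (simp add: R_def algebra_simps power2_eq_square)
  also have "\<dots> = (expectation Z - mu) * (expectation Z' - mu) + expectation R"
    using int_R uncorr by (simp add: prob_space algebra_simps power2_eq_square)
  finally have split: "expectation (\<lambda>x. (X x - mu) * (X' x - mu))
      = (expectation Z - mu) * (expectation Z' - mu) + expectation R" .
  have "\<bar>expectation Z - mu\<bar> = \<bar>expectation (\<lambda>x. Z x - X x)\<bar>"
    using mu by simp
  also have "\<dots> \<le> e"
    using approx(1) abs_integral_le_integral[of M "\<lambda>x. Z x - X x" "\<lambda>x. \<bar>X x - Z x\<bar>"] by (simp add: abs_minus_commute)
  finally have Z_mean: "\<bar>expectation Z - mu\<bar> \<le> e" .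
  have "0 \<le> expectation Z'" "expectation Z' \<le> 1"
    using unit integral_mono[of M Z' "\<lambda>_. 1"] by (auto intro!: integral_nonneg_AE simp: prob_space)
  then have "\<bar>(expectation Z - mu) * (expectation Z' - mu)\<bar> \<le> e * 1"
    unfolding abs_mult using Z_mean mu by (intro mult_mono) auto
  moreover have "\<bar>expectation R\<bar> \<le> 2 * e"
    using abs_integral_le_integral[OF int_R _ R_le] approx by simp
  ultimately show ?thesis unfolding split by linarith
qed

lemma card_band_le: "card {k'. k' < (N::nat) \<and> k < k' + L \<and> k' < k + L} \<le> 2 * L"
proof -
  have "card {k'. k' < N \<and> k < k' + L \<and> k' < k + L} \<le> card {k + 1 - L..<k + L}"
    by (intro card_mono) auto
  then show ?thesis by simp
qed

lemma (in prob_space) expectation_sum_sq_le: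
  fixes X :: "nat \<Rightarrow> 'a \<Rightarrow> real"
  assumes [measurable]: "\<And>k. X k \<in> borel_measurable M"
    and bounded: "\<And>k x. x \<in> space M \<Longrightarrow> \<bar>X k x - mu\<bar> \<le> 1"
    and far: "\<And>k k'. k + L \<le> k' \<or> k' + L \<le> k \<Longrightarrow>
      \<bar>expectation (\<lambda>x. (X k x - mu) * (X k' x - mu))\<bar> \<le> c"
    and "0 \<le> c"
  shows "integrable M (\<lambda>x. (\<Sum>k<N. X k x - mu)\<^sup>2)"
    and "expectation (\<lambda>x. (\<Sum>k<N. X k x - mu)\<^sup>2) \<le> real N * (c * real N + 2 * real L)"
proof -
  have int_cov: "integrable M (\<lambda>x. (X k x - mu) * (X k' x - mu))" for k k'
    using bounded by (intro integrable_const_bound[where B=1]) (auto simp: abs_mult intro!: mult_le_one)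
  then show "integrable M (\<lambda>x. (\<Sum>k<N. X k x - mu)\<^sup>2)"
    unfolding power2_eq_square sum_product by simp
  have cov_le: "expectation (\<lambda>x. (X k x - mu) * (X k' x - mu))
      \<le> c + of_bool (k < k' + L \<and> k' < k + L)" for k k'
  proof (cases "k < k' + L \<and> k' < k + L")
    case True
    have "(X k x - mu) * (X k' x - mu) \<le> 1" if "x \<in> space M" for x
      using bounded[OF that, of k] bounded[OF that, of k']
      by (metis abs_ge_zero abs_le_D1 abs_mult mult_le_one)
    then have "expectation (\<lambda>x. (X k x - mu) * (X k' x - mu)) \<le> expectation (\<lambda>_. 1)"
      using int_cov by (intro integral_mono) auto
    then show ?thesis using True \<open>0 \<le> c\<close> by (simp add: prob_space)
  next
    case False
    then show ?thesis using far[of k k'] by auto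
  qed
  have "expectation (\<lambda>x. (\<Sum>k<N. X k x - mu)\<^sup>2)
      = (\<Sum>k<N. \<Sum>k'<N. expectation (\<lambda>x. (X k x - mu) * (X k' x - mu)))"
    unfolding power2_eq_square sum_product using int_cov by simp
  also have "\<dots> \<le> (\<Sum>k<N. \<Sum>k'<N. c + of_bool (k < k' + L \<and> k' < k + L))"
    by (intro sum_mono cov_le)
  also have "\<dots> = (\<Sum>k<N. c * real N + real (card {k'. k' < N \<and> k < k' + L \<and> k' < k + L}))"
    by (simp add: sum.distrib of_bool_def sum.If_cases Int_def conj_commute)
  also have "\<dots> \<le> (\<Sum>k<N. c * real N + 2 * real L)"
    using of_nat_le_iff[where 'a=real, THEN iffD2, OF card_band_le[of N _ L]]
    by (intro sum_mono add_left_mono) simp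
  finally show "expectation (\<lambda>x. (\<Sum>k<N. X k x - mu)\<^sup>2) \<le> real N * (c * real N + 2 * real L)"
    by simp
qed

lemma (in prob_space) prob_sample_mean_deviation_le:
  fixes X :: "nat \<Rightarrow> 'a \<Rightarrow> real"
  assumes [measurable]: "\<And>k. X k \<in> borel_measurable M"
    and bounded: "\<And>k x. x \<in> space M \<Longrightarrow> \<bar>X k x - mu\<bar> \<le> 1"
    and far: "\<And>k k'. k + L \<le> k' \<or> k' + L \<le> k \<Longrightarrow>
      \<bar>expectation (\<lambda>x. (X k x - mu) * (X k' x - mu))\<bar> \<le> c"
    and "0 \<le> c" "\<epsilon> > 0" "N > 0"
  shows "prob {x \<in> space M. \<epsilon> < \<bar>(\<Sum>k<N. X k x) / real N - mu\<bar>}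
    \<le> c / \<epsilon>\<^sup>2 + 2 * real L / (\<epsilon>\<^sup>2 * real N)"
proof -
  define S where "S x = (\<Sum>k<N. X k x - mu)" for x
  note second_moment = expectation_sum_sq_le[where X=X and N=N, OF assms(1-4), folded S_def]
  have "prob {x \<in> space M. \<epsilon> < \<bar>(\<Sum>k<N. X k x) / real N - mu\<bar>}
      \<le> prob {x \<in> space M. (\<epsilon> * real N)\<^sup>2 \<le> (S x)\<^sup>2}"
  proof (rule finite_measure_mono)
    have "(\<epsilon> * real N)\<^sup>2 \<le> (S x)\<^sup>2" if "\<epsilon> < \<bar>(\<Sum>k<N. X k x) / real N - mu\<bar>" for x
    proof -
      have "\<epsilon> * real N \<le> \<bar>S x\<bar>"
        using that \<open>N > 0\<close> by (simp add: S_def sum_subtractf field_simps)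
      then show ?thesis
        using \<open>\<epsilon> > 0\<close> by (simp add: abs_le_square_iff[symmetric])
    qed
    then show "{x \<in> space M. \<epsilon> < \<bar>(\<Sum>k<N. X k x) / real N - mu\<bar>}
        \<subseteq> {x \<in> space M. (\<epsilon> * real N)\<^sup>2 \<le> (S x)\<^sup>2}" by auto
  qed (simp add: S_def)
  also have "\<dots> \<le> expectation (\<lambda>x. (S x)\<^sup>2) / (\<epsilon> * real N)\<^sup>2"
    using \<open>\<epsilon> > 0\<close> \<open>N > 0\<close> second_moment(1)
    by (intro integral_Markov_inequality_measure[where A="space M"]) (auto simp: S_def)
  also have "\<dots> \<le> real N * (c * real N + 2 * real L) / (\<epsilon> * real N)\<^sup>2"
    by (intro divide_right_mono second_moment(2) zero_le_power2)
  also have "\<dots> = c / \<epsilon>\<^sup>2 + 2 * real L / (\<epsilon>\<^sup>2 * real N)"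
    using \<open>\<epsilon> > 0\<close> \<open>N > 0\<close> by (simp add: field_simps power2_eq_square)
  finally show ?thesis .
qed

lemma (in prob_space) sample_mean_conv_prob_of_approx_dependent:
  fixes X :: "nat \<Rightarrow> 'a \<Rightarrow> real" and Xm :: "nat \<Rightarrow> nat \<Rightarrow> 'a \<Rightarrow> real"
  assumes [measurable]: "\<And>k. X k \<in> borel_measurable M" "\<And>m k. Xm m k \<in> borel_measurable M"
    and unit: "\<And>m k x. x \<in> space M \<Longrightarrow> X k x \<in> {0..1} \<and> Xm m k x \<in> {0..1}"
    and mean: "\<And>k. expectation (X k) = mu"
    and approx: "\<And>m k. expectation (\<lambda>x. \<bar>X k x - Xm m k x\<bar>) \<le> e m" and "e \<longlonglongrightarrow> 0"
    and uncorr: "\<And>m k k'. k + L m \<le> k' \<Longrightarrow>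
      expectation (\<lambda>x. Xm m k x * Xm m k' x) = expectation (Xm m k) * expectation (Xm m k')"
  shows "conv_prob M (\<lambda>N x. (\<Sum>k<N. X k x) / real N) (\<lambda>_. mu)"
proof -
  have "0 \<le> expectation (X 0)"
    using unit by (auto intro!: integral_nonneg_AE)
  moreover have "expectation (X 0) \<le> expectation (\<lambda>_. 1)"
    using unit by (intro integral_mono integrable_unit_interval) auto
  ultimately have mu: "mu \<in> {0..1}"
    using mean[of 0] by (simp add: prob_space)
  have e_nonneg: "0 \<le> e m" for m
  proof -
    have "0 \<le> expectation (\<lambda>x. \<bar>X 0 x - Xm m 0 x\<bar>)"
      by (rule integral_nonneg_AE) simp
    with approx[of 0 m] show ?thesis by linarith
  qed
  have far_le: "\<bar>expectation (\<lambda>x. (X k x - mu) * (X k' x - mu))\<bar> \<le> 3 * e m"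
    if "k + L m \<le> k'" for m k k'
    using unit mu mean approx uncorr[OF that]
    by (intro covariance_le_of_L1_approx[where Z="Xm m k" and Z'="Xm m k'"]) auto
  have far: "\<bar>expectation (\<lambda>x. (X k x - mu) * (X k' x - mu))\<bar> \<le> 3 * e m"
    if "k + L m \<le> k' \<or> k' + L m \<le> k" for m k k'
    using that far_le[of k m k'] far_le[of k' m k] by (auto simp: mult.commute)
  have bounded: "\<bar>X k x - mu\<bar> \<le> 1" if "x \<in> space M" for k x
    using unit[OF that, of k 0] mu by auto
  show ?thesis
    unfolding conv_prob_def
  proof (intro allI impI)
    fix \<epsilon> :: real assume "\<epsilon> > 0"
    have le: "prob {x \<in> space M. \<epsilon> < \<bar>(\<Sum>k<N. X k x) / real N - mu\<bar>}
        \<le> 3 * e m / \<epsilon>\<^sup>2 + 2 * real (L m) / \<epsilon>\<^sup>2 / real N" if "0 < N" for m N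
    proof -
      have "prob {x \<in> space M. \<epsilon> < \<bar>(\<Sum>k<N. X k x) / real N - mu\<bar>}
          \<le> 3 * e m / \<epsilon>\<^sup>2 + 2 * real (L m) / (\<epsilon>\<^sup>2 * real N)"
        using e_nonneg[of m] \<open>\<epsilon> > 0\<close> that
        by (intro prob_sample_mean_deviation_le[where X=X, OF assms(1) bounded far[of _ m]]) auto
      then show ?thesis
        by (simp add: mult.assoc)
    qed
    have "(\<lambda>m. 3 * e m / \<epsilon>\<^sup>2) \<longlonglongrightarrow> 3 * 0 / \<epsilon>\<^sup>2"
      using \<open>\<epsilon> > 0\<close> by (intro tendsto_intros \<open>e \<longlonglongrightarrow> 0\<close>) simp
    then have lim: "(\<lambda>m. 3 * e m / \<epsilon>\<^sup>2) \<longlonglongrightarrow> 0"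
      by simp
    show "(\<lambda>N. prob {x \<in> space M. \<epsilon> < \<bar>(\<Sum>k<N. X k x) / real N - mu\<bar>}) \<longlonglongrightarrow> 0"
      by (rule tendsto_zero_of_le_add_inverse[OF _ le lim]) simp
  qed
qed

section \<open>Empirical distribution functions\<close>

definition empirical_cdf :: "nat \<Rightarrow> (nat \<Rightarrow> real) \<Rightarrow> real \<Rightarrow> real" where
  "empirical_cdf N v y = (\<Sum>k<N. of_bool (v k \<le> y)) / real N"

lemma mono_empirical_cdf: "mono (empirical_cdf N v)"
  unfolding empirical_cdf_def by (intro monoI divide_right_mono sum_mono) auto

lemma empirical_cdf_perturb:
  fixes v w A :: "nat \<Rightarrow> real" and N :: nat
  assumes close: "\<And>k. \<bar>w k - v k\<bar> \<le> \<delta> * A k" and "0 \<le> \<delta>" "\<And>k. 0 \<le> A k" "A 0 \<le> R"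
    and "2 * \<delta> * R \<le> r"
  defines "T \<equiv> (\<Sum>k<N. of_bool (R < A k)) / real N"
  shows "empirical_cdf N v (v 0 - r) - T \<le> empirical_cdf N w (w 0)"
    and "empirical_cdf N w (w 0) \<le> empirical_cdf N v (v 0 + r) + T"
proof -
  have scale: "\<delta> * A k \<le> \<delta> * R" if "A k \<le> R" for k
    using that \<open>0 \<le> \<delta>\<close> by (rule mult_left_mono)
  have near0: "\<bar>w 0 - v 0\<bar> \<le> \<delta> * R"
    using close[of 0] scale[OF \<open>A 0 \<le> R\<close>] by linarith
  have near: "\<bar>w k - v k\<bar> \<le> \<delta> * R" if "\<not> R < A k" for k
    using that close[of k] scale[of k] by linarith
  have "of_bool (v k \<le> v 0 - r) - of_bool (R < A k) \<le> (of_bool (w k \<le> w 0) :: real)" for k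
    using near[of k] near0 \<open>2 * \<delta> * R \<le> r\<close> by (auto simp: abs_le_iff)
  then have "(\<Sum>k<N. of_bool (v k \<le> v 0 - r) - of_bool (R < A k)) / real N
      \<le> (\<Sum>k<N. of_bool (w k \<le> w 0) :: real) / real N"
    by (intro divide_right_mono sum_mono) auto
  then show "empirical_cdf N v (v 0 - r) - T \<le> empirical_cdf N w (w 0)"
    by (simp add: empirical_cdf_def T_def sum_subtractf diff_divide_distrib)
  have "(of_bool (w k \<le> w 0) :: real) \<le> of_bool (v k \<le> v 0 + r) + of_bool (R < A k)" for k
    using near[of k] near0 \<open>2 * \<delta> * R \<le> r\<close> by (auto simp: abs_le_iff)
  then have "(\<Sum>k<N. of_bool (w k \<le> w 0) :: real) / real N
      \<le> (\<Sum>k<N. of_bool (v k \<le> v 0 + r) + of_bool (R < A k)) / real N"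
    by (intro divide_right_mono sum_mono) auto
  then show "empirical_cdf N w (w 0) \<le> empirical_cdf N v (v 0 + r) + T"
    by (simp add: empirical_cdf_def T_def sum.distrib add_divide_distrib)
qed

lemma abs_mono_sub_le_of_bracket:
  fixes G F :: "real \<Rightarrow> real"
  assumes "mono G" "y1 \<le> y" "y \<le> y2"
    and "\<bar>G y1 - F y1\<bar> \<le> e" "\<bar>G y2 - F y2\<bar> \<le> e" "\<bar>F y1 - F y\<bar> \<le> e" "\<bar>F y2 - F y\<bar> \<le> e"
  shows "\<bar>G y - F y\<bar> \<le> 2 * e"
  using assms monoD[OF \<open>mono G\<close> \<open>y1 \<le> y\<close>] monoD[OF \<open>mono G\<close> \<open>y \<le> y2\<close>] by (auto simp: abs_le_iff)

lemma finite_bracketing_grid: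
  fixes a b g :: real
  assumes "a \<le> b" "0 < g"
  obtains Y where "finite Y" "Y \<subseteq> {a..b}"
    "\<And>y. y \<in> {a..b} \<Longrightarrow> \<exists>y1\<in>Y. \<exists>y2\<in>Y. y1 \<le> y \<and> y \<le> y2 \<and> y2 - y1 \<le> g"
proof
  define J where "J = nat \<lceil>(b - a) / g\<rceil>"
  define p where "p j = min b (a + real j * g)" for j :: nat
  show "finite (p ` {..Suc J})" by simp
  show "p ` {..Suc J} \<subseteq> {a..b}"
    using assms by (auto simp: p_def)
  fix y assume y: "y \<in> {a..b}"
  define j where "j = nat \<lfloor>(y - a) / g\<rfloor>"
  have j: "real j = of_int \<lfloor>(y - a) / g\<rfloor>"
    using y assms by (simp add: j_def)
  have "real j \<le> (y - a) / g" "(y - a) / g < real j + 1"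
    unfolding j by linarith+
  then have lower: "a + real j * g \<le> y" and upper: "y < a + real (Suc j) * g"
    using assms by (simp_all add: field_simps)
  have "j \<le> J"
    using y assms unfolding j_def J_def
    by (intro nat_mono order_trans[OF floor_le_ceiling ceiling_mono] divide_right_mono) auto
  have "p j \<le> y" "y \<le> p (Suc j)"
    using lower upper y by (auto simp: p_def)
  moreover have "p (Suc j) - p j \<le> g"
    using assms unfolding p_def by (simp add: algebra_simps min_def)
  moreover have "p j \<in> p ` {..Suc J}" "p (Suc j) \<in> p ` {..Suc J}"
    using \<open>j \<le> J\<close> by auto
  ultimately show "\<exists>y1\<in>p ` {..Suc J}. \<exists>y2\<in>p ` {..Suc J}. y1 \<le> y \<and> y \<le> y2 \<and> y2 - y1 \<le> g"
    by blast
qed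

lemma uniform_modulus_of_continuous_on_Icc:
  fixes F :: "real \<Rightarrow> real"
  assumes "continuous_on {a..b} F" "0 < e"
  obtains \<rho> where "0 < \<rho>" "\<rho> \<le> 1"
    "\<And>x x'. x \<in> {a..b} \<Longrightarrow> x' \<in> {a..b} \<Longrightarrow> \<bar>x - x'\<bar> \<le> \<rho> \<Longrightarrow> \<bar>F x - F x'\<bar> \<le> e"
proof -
  have "uniformly_continuous_on {a..b} F"
    using assms(1) by (rule compact_uniformly_continuous) simp
  then obtain g where "0 < g"
    and unif: "\<forall>x\<in>{a..b}. \<forall>x'\<in>{a..b}. dist x' x < g \<longrightarrow> dist (F x') (F x) < e"
    using \<open>0 < e\<close> unfolding uniformly_continuous_on_def by blast
  show thesis
    by (rule that[of "min 1 (g / 2)"]) (use \<open>0 < g\<close> unif in \<open>fastforce simp: dist_real_def\<close>)+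
qed

lemma uniform_approx_of_finite_grid:
  fixes F :: "real \<Rightarrow> real"
  assumes "continuous_on {a..b} F" "a \<le> b" "0 < e"
  obtains Y where "finite Y" "Y \<subseteq> {a..b}"
    "\<And>G y. mono G \<Longrightarrow> (\<forall>z\<in>Y. \<bar>G z - F z\<bar> \<le> e) \<Longrightarrow> y \<in> {a..b} \<Longrightarrow> \<bar>G y - F y\<bar> \<le> 2 * e"
proof -
  obtain \<rho> where "0 < \<rho>" "\<rho> \<le> 1"
    and F_near: "\<And>x x'. x \<in> {a..b} \<Longrightarrow> x' \<in> {a..b} \<Longrightarrow> \<bar>x - x'\<bar> \<le> \<rho> \<Longrightarrow> \<bar>F x - F x'\<bar> \<le> e"
    using uniform_modulus_of_continuous_on_Icc[OF assms(1,3)] by metis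
  obtain Y where Y: "finite Y" "Y \<subseteq> {a..b}"
    and bracket: "\<And>y. y \<in> {a..b} \<Longrightarrow> \<exists>y1\<in>Y. \<exists>y2\<in>Y. y1 \<le> y \<and> y \<le> y2 \<and> y2 - y1 \<le> \<rho>"
    using finite_bracketing_grid[OF \<open>a \<le> b\<close> \<open>0 < \<rho>\<close>] by blast
  show thesis
  proof (rule that[OF Y])
    fix G and y assume G: "mono G" "\<forall>z\<in>Y. \<bar>G z - F z\<bar> \<le> e" and y: "y \<in> {a..b}"
    then obtain y1 y2 where y12: "y1 \<in> Y" "y2 \<in> Y" "y1 \<le> y" "y \<le> y2" "y2 - y1 \<le> \<rho>"
      using bracket by blast
    show "\<bar>G y - F y\<bar> \<le> 2 * e"
    proof (rule abs_mono_sub_le_of_bracket[OF \<open>mono G\<close> \<open>y1 \<le> y\<close> \<open>y \<le> y2\<close>])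
      show "\<bar>G y1 - F y1\<bar> \<le> e" "\<bar>G y2 - F y2\<bar> \<le> e"
        using G(2) y12 by blast+
      show "\<bar>F y1 - F y\<bar> \<le> e" "\<bar>F y2 - F y\<bar> \<le> e"
        using y12 Y y by (intro F_near; auto)+
    qed
  qed
qed

lemma abs_empirical_rank_sub_cdf_less:
  fixes F :: "real \<Rightarrow> real" and v w A :: "nat \<Rightarrow> real" and K :: real
  assumes close: "\<And>k. \<bar>w k - v k\<bar> \<le> \<delta> * A k" and "0 \<le> \<delta>" "\<delta> \<le> \<eta>" "\<And>k. 0 \<le> A k" "A 0 \<le> R"
    and "2 * \<eta> * R \<le> r" "0 \<le> r" "r \<le> 1" "\<bar>v 0\<bar> \<le> K"
    and F_near: "\<And>x x'. x \<in> {-K-1..K+1} \<Longrightarrow> x' \<in> {-K-1..K+1} \<Longrightarrow> \<bar>x - x'\<bar> \<le> r \<Longrightarrow> \<bar>F x - F x'\<bar> \<le> e"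
    and cdf_near: "\<And>x. x \<in> {-K-1..K+1} \<Longrightarrow> \<bar>empirical_cdf N v x - F x\<bar> \<le> 2 * e"
    and tail: "(\<Sum>k<N. of_bool (R < A k)) / real N < e"
  shows "\<bar>empirical_cdf N w (w 0) - F (v 0)\<bar> < 4 * e"
proof -
  define T where "T = (\<Sum>k<N. of_bool (R < A k)) / real N"
  have "0 \<le> R"
    using \<open>\<And>k. 0 \<le> A k\<close>[of 0] \<open>A 0 \<le> R\<close> by linarith
  then have "2 * \<delta> * R \<le> r"
    using \<open>\<delta> \<le> \<eta>\<close> \<open>2 * \<eta> * R \<le> r\<close> mult_right_mono[of \<delta> \<eta> R] by linarith
  then have "empirical_cdf N v (v 0 - r) - T \<le> empirical_cdf N w (w 0)"
    "empirical_cdf N w (w 0) \<le> empirical_cdf N v (v 0 + r) + T"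
    unfolding T_def by (rule empirical_cdf_perturb[where w=w and v=v and A=A, OF close assms(2,4,5)])+
  moreover have "v 0 - r \<in> {-K-1..K+1}" "v 0 + r \<in> {-K-1..K+1}" "v 0 \<in> {-K-1..K+1}"
    using \<open>\<bar>v 0\<bar> \<le> K\<close> \<open>0 \<le> r\<close> \<open>r \<le> 1\<close> by auto
  then have "\<bar>F (v 0 - r) - F (v 0)\<bar> \<le> e" "\<bar>F (v 0 + r) - F (v 0)\<bar> \<le> e"
    "\<bar>empirical_cdf N v (v 0 - r) - F (v 0 - r)\<bar> \<le> 2 * e"
    "\<bar>empirical_cdf N v (v 0 + r) - F (v 0 + r)\<bar> \<le> 2 * e"
    using \<open>0 \<le> r\<close> by (auto intro!: F_near cdf_near)
  ultimately show ?thesis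
    using tail unfolding T_def[symmetric] by (auto simp: abs_le_iff abs_less_iff)
qed

lemma abs_lin_pred_diff_le:
  "\<bar>lin_pred d c' Y s \<omega> - lin_pred d c Y s \<omega>\<bar> \<le> (\<Sum>i<d. \<bar>c' i - c i\<bar>) * (\<Sum>i<d. \<bar>Y (s - int i) \<omega>\<bar>)"
proof -
  have "\<bar>lin_pred d c' Y s \<omega> - lin_pred d c Y s \<omega>\<bar> \<le> (\<Sum>i<d. \<bar>c' i - c i\<bar> * \<bar>Y (s - int i) \<omega>\<bar>)"
    unfolding lin_pred_def sum_subtractf[symmetric] left_diff_distrib[symmetric] abs_mult[symmetric]
    by (rule sum_abs)
  also have "\<dots> \<le> (\<Sum>i<d. \<bar>c' i - c i\<bar> * (\<Sum>j<d. \<bar>Y (s - int j) \<omega>\<bar>))"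
    by (intro sum_mono mult_left_mono member_le_sum) auto
  finally show ?thesis
    by (simp add: sum_distrib_right)
qed

section \<open>Continuity of the prediction coefficients\<close>

text \<open>Neighbourhoods of phi that constrain only the first d coordinates: these are the only ones
  that pred_coef reads and that conv_prob_vec controls.\<close>

definition coord_nhds :: "nat \<Rightarrow> (nat \<Rightarrow> real) \<Rightarrow> (nat \<Rightarrow> real) filter" where
  "coord_nhds d phi = (INF r\<in>{0<..}. principal {\<psi>. \<forall>i<d. \<bar>\<psi> i - phi i\<bar> < r})"

lemma eventually_coord_nhds:
  "eventually P (coord_nhds d phi) \<longleftrightarrow> (\<exists>r>0. \<forall>\<psi>. (\<forall>i<d. \<bar>\<psi> i - phi i\<bar> < r) \<longrightarrow> P \<psi>)"
  unfolding coord_nhds_def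
proof (subst eventually_INF_base)
  fix r r' :: real assume "r \<in> {0<..}" "r' \<in> {0<..}"
  then show "\<exists>x\<in>{0<..}. principal {\<psi>. \<forall>i<d. \<bar>\<psi> i - phi i\<bar> < x}
      \<le> principal {\<psi>. \<forall>i<d. \<bar>\<psi> i - phi i\<bar> < r} \<sqinter> principal {\<psi>. \<forall>i<d. \<bar>\<psi> i - phi i\<bar> < r'}"
    by (intro bexI[of _ "min r r'"]) auto
qed (auto simp: eventually_principal)

lemma tendsto_coord_nhds: "i < d \<Longrightarrow> ((\<lambda>\<psi>. \<psi> i) \<longlongrightarrow> phi i) (coord_nhds d phi)"
  by (rule tendstoI) (auto simp: eventually_coord_nhds dist_real_def)

lemma tendsto_companion_mat:
  "i < d \<Longrightarrow> ((\<lambda>\<psi>. companion_mat \<psi> i j) \<longlongrightarrow> companion_mat phi i j) (coord_nhds d phi)"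
  by (cases "j = 0") (simp_all add: companion_mat_def tendsto_coord_nhds)

lemma pred_coef_Suc: "pred_coef d \<psi> (Suc h) = mat_vec d (companion_mat \<psi>) (pred_coef d \<psi> h)"
  unfolding pred_coef_def by simp

lemma tendsto_pred_coef:
  "i < d \<Longrightarrow> ((\<lambda>\<psi>. pred_coef d \<psi> h i) \<longlongrightarrow> pred_coef d phi h i) (coord_nhds d phi)"
proof (induction h arbitrary: i)
  case 0
  then show ?case by (simp add: pred_coef_def)
next
  case (Suc h)
  then show ?case
    unfolding pred_coef_Suc mat_vec_def by (intro tendsto_sum tendsto_mult tendsto_companion_mat Suc.IH) auto
qed

lemma measurable_pred_coef[measurable]:
  assumes [measurable]: "\<And>i. (\<lambda>\<omega>. \<psi> \<omega> i) \<in> borel_measurable M"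
  shows "(\<lambda>\<omega>. pred_coef d (\<psi> \<omega>) h i) \<in> borel_measurable M"
proof (induction h arbitrary: i)
  case 0
  then show ?case by (simp add: pred_coef_def unit_vec_def)
next
  case (Suc h)
  note [measurable] = Suc.IH
  show ?case
    unfolding pred_coef_Suc mat_vec_def companion_mat_def by measurable
qed

lemma conv_prob_pred_coef:
  fixes phihat :: "nat \<Rightarrow> 'a \<Rightarrow> nat \<Rightarrow> real"
  assumes "prob_space M" and [measurable]: "\<And>n i. (\<lambda>\<omega>. phihat n \<omega> i) \<in> borel_measurable M"
    and "conv_prob_vec M d phihat phi" "\<eta> > 0"
  shows "(\<lambda>n. measure M {\<omega>\<in>space M. \<eta> < (\<Sum>i<d. \<bar>pred_coef d (phihat n \<omega>) h i - pred_coef d phi h i\<bar>)})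
    \<longlonglongrightarrow> 0"
proof -
  interpret prob_space M by fact
  have "((\<lambda>\<psi>. \<Sum>i<d. \<bar>pred_coef d \<psi> h i - pred_coef d phi h i\<bar>)
      \<longlongrightarrow> (\<Sum>i<d. \<bar>pred_coef d phi h i - pred_coef d phi h i\<bar>)) (coord_nhds d phi)"
    by (intro tendsto_intros tendsto_pred_coef) auto
  then have "eventually (\<lambda>\<psi>. (\<Sum>i<d. \<bar>pred_coef d \<psi> h i - pred_coef d phi h i\<bar>) < \<eta>) (coord_nhds d phi)"
    using \<open>\<eta> > 0\<close> by (intro order_tendstoD(2)) auto
  then obtain r where "r > 0"
    and near: "\<And>\<psi>. (\<forall>i<d. \<bar>\<psi> i - phi i\<bar> < r) \<Longrightarrow> (\<Sum>i<d. \<bar>pred_coef d \<psi> h i - pred_coef d phi h i\<bar>) < \<eta>"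
    unfolding eventually_coord_nhds by blast
  have "{\<omega>\<in>space M. \<eta> < (\<Sum>i<d. \<bar>pred_coef d (phihat n \<omega>) h i - pred_coef d phi h i\<bar>)}
      \<subseteq> {\<omega>\<in>space M. r / 2 < sqrt (\<Sum>i<d. (phihat n \<omega> i - phi i)\<^sup>2)}" for n
  proof safe
    fix \<omega> assume "\<eta> < (\<Sum>i<d. \<bar>pred_coef d (phihat n \<omega>) h i - pred_coef d phi h i\<bar>)"
    then obtain i where "i < d" "r \<le> \<bar>phihat n \<omega> i - phi i\<bar>"
      using near[of "phihat n \<omega>"] by force
    moreover have "\<bar>phihat n \<omega> i - phi i\<bar> \<le> L2_set (\<lambda>i. \<bar>phihat n \<omega> i - phi i\<bar>) {..<d}"
      using \<open>i < d\<close> by (intro member_le_L2_set) auto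
    ultimately show "r / 2 < sqrt (\<Sum>i<d. (phihat n \<omega> i - phi i)\<^sup>2)"
      using \<open>r > 0\<close> by (simp add: L2_set_def)
  qed
  then have le: "prob {\<omega>\<in>space M. \<eta> < (\<Sum>i<d. \<bar>pred_coef d (phihat n \<omega>) h i - pred_coef d phi h i\<bar>)}
      \<le> prob {\<omega>\<in>space M. r / 2 < sqrt (\<Sum>i<d. (phihat n \<omega> i - phi i)\<^sup>2)}" for n
    by (intro finite_measure_mono) measurable
  have lim: "(\<lambda>n. prob {\<omega>\<in>space M. r / 2 < sqrt (\<Sum>i<d. (phihat n \<omega> i - phi i)\<^sup>2)}) \<longlonglongrightarrow> 0"
    using \<open>r > 0\<close> by (intro assms(3)[unfolded conv_prob_vec_def, rule_format]) simp
  show ?thesis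
    by (rule Lim_null_comparison[OF _ lim]) (use le in \<open>auto intro!: always_eventually\<close>)
qed

section \<open>Causal linear processes\<close>

definition innov_past :: "(int \<Rightarrow> 'a \<Rightarrow> real) \<Rightarrow> int \<Rightarrow> 'a \<Rightarrow> nat \<Rightarrow> real" where
  "innov_past eps s \<omega> = (\<lambda>l. eps (s - int l) \<omega>)"

text \<open>For w = innov_past eps s \<omega>, i.e. w l = eps (s - l), the value ma_past a w j is Y (s - j);
  its truncation at lag m reads only w 0, ..., w (m + j - 1).\<close>

definition ma_past :: "(nat \<Rightarrow> real) \<Rightarrow> (nat \<Rightarrow> real) \<Rightarrow> nat \<Rightarrow> real" where
  "ma_past a w = (\<lambda>j. \<Sum>i. a i * w (i + j))"

definition ma_past_trunc :: "(nat \<Rightarrow> real) \<Rightarrow> nat \<Rightarrow> (nat \<Rightarrow> real) \<Rightarrow> nat \<Rightarrow> real" where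
  "ma_past_trunc a m w = (\<lambda>j. \<Sum>i<m. a i * w (i + j))"

lemma measurable_ma_past[measurable]:
  "ma_past a \<in> measurable (PiM UNIV (\<lambda>_. borel)) (PiM UNIV (\<lambda>_. borel))"
  unfolding ma_past_def by (rule measurable_PiM_single') auto

lemma measurable_ma_past_component[measurable]:
  "(\<lambda>w. ma_past a w j) \<in> borel_measurable (PiM UNIV (\<lambda>_. borel))"
  unfolding ma_past_def by measurable

lemma measurable_ma_past_trunc_component[measurable]:
  "(\<lambda>w. ma_past_trunc a m w j) \<in> borel_measurable (PiM UNIV (\<lambda>_. borel))"
  unfolding ma_past_trunc_def by measurable

locale iid_innovations = prob_space M for M :: "'a measure" +
  fixes eps :: "int \<Rightarrow> 'a \<Rightarrow> real"
  assumes indep_eps: "indep_vars (\<lambda>_. borel) eps UNIV"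
    and ident_eps: "\<And>s. distr M borel (eps s) = distr M borel (eps 0)"
begin

definition innov_law :: "(nat \<Rightarrow> real) measure" where
  "innov_law = PiM UNIV (\<lambda>_. distr M borel (eps 0))"

lemma measurable_eps[measurable]: "eps s \<in> borel_measurable M"
  using indep_eps by (auto simp: indep_vars_def)

lemma sets_innov_law: "sets innov_law = sets (PiM UNIV (\<lambda>_. borel))"
  unfolding innov_law_def by (intro sets_PiM_cong) auto

lemma measurable_innov_past[measurable]: "innov_past eps s \<in> measurable M (PiM UNIV (\<lambda>_. borel))"
  unfolding innov_past_def by (rule measurable_PiM_single') auto

lemma distr_innov_past: "distr M innov_law (innov_past eps s) = innov_law"
proof -
  define D where "D = distr M borel (eps 0)"
  define E where "E \<omega> = (\<lambda>i\<in>(UNIV::int set). eps i \<omega>)" for \<omega>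
  define f where "f n = s - int n" for n :: nat
  have "distr M (PiM UNIV (\<lambda>_. borel)) E = PiM UNIV (\<lambda>i. distr M borel (eps i))"
    unfolding E_def using indep_eps by (subst indep_vars_iff_distr_eq_PiM'[symmetric]) auto
  also have "\<dots> = PiM UNIV (\<lambda>_. D)"
    using ident_eps unfolding D_def by (intro PiM_cong) auto
  finally have E_law: "distr M (PiM UNIV (\<lambda>_. D)) E = PiM UNIV (\<lambda>_. D)"
    by (subst (asm) distr_cong[OF refl sets_PiM_cong[OF refl, of _ _ "\<lambda>_. D"]]) (auto simp: D_def)
  have E_meas: "E \<in> measurable M (PiM UNIV (\<lambda>_. D))"
    unfolding E_def D_def by (auto intro!: measurable_PiM_single')
  have reindex_meas: "(\<lambda>\<omega>. \<lambda>n\<in>UNIV. \<omega> (f n)) \<in> measurable (PiM UNIV (\<lambda>_. D)) (PiM UNIV (\<lambda>_. D))"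
    by (auto intro!: measurable_PiM_single')
  have "distr M (PiM UNIV (\<lambda>_. D)) (innov_past eps s)
      = distr (distr M (PiM UNIV (\<lambda>_. D)) E) (PiM UNIV (\<lambda>_. D)) (\<lambda>\<omega>. \<lambda>n\<in>UNIV. \<omega> (f n))"
    by (subst distr_distr[OF reindex_meas E_meas]) (auto simp: E_def f_def innov_past_def comp_def intro!: distr_cong)
  also have "\<dots> = distr (PiM UNIV (\<lambda>_. D)) (PiM UNIV (\<lambda>i. (\<lambda>_::int. D) (f i))) (\<lambda>\<omega>. \<lambda>n\<in>UNIV. \<omega> (f n))"
    unfolding E_law by simp
  also have "\<dots> = PiM UNIV (\<lambda>i. (\<lambda>_::int. D) (f i))"
    by (rule distr_PiM_reindex) (auto simp: D_def f_def inj_on_def intro!: prob_space_distr)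
  finally show ?thesis
    by (simp add: innov_law_def D_def)
qed

lemma integral_innov_past:
  fixes f :: "(nat \<Rightarrow> real) \<Rightarrow> real"
  assumes "f \<in> borel_measurable (PiM UNIV (\<lambda>_. borel))"
  shows "expectation (\<lambda>\<omega>. f (innov_past eps s \<omega>)) = integral\<^sup>L innov_law f"
proof -
  have "f \<in> borel_measurable innov_law"
    using assms measurable_cong_sets[OF sets_innov_law refl] by blast
  moreover have "innov_past eps s \<in> measurable M innov_law"
    using measurable_innov_past measurable_cong_sets[OF refl sets_innov_law] by blast
  ultimately show ?thesis
    using integral_distr[of "innov_past eps s" M innov_law f] distr_innov_past by simp
qed

lemma indep_var_innov_past_local:
  fixes f g :: "(nat \<Rightarrow> real) \<Rightarrow> real"
  assumes [measurable]: "f \<in> borel_measurable (PiM UNIV (\<lambda>_. borel))"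
      "g \<in> borel_measurable (PiM UNIV (\<lambda>_. borel))"
    and local: "\<And>w w'. (\<And>l. l < L \<Longrightarrow> w l = w' l) \<Longrightarrow> f w = f w'"
      "\<And>w w'. (\<And>l. l < L \<Longrightarrow> w l = w' l) \<Longrightarrow> g w = g w'"
    and "s' + int L \<le> s"
  shows "indep_var borel (\<lambda>\<omega>. f (innov_past eps s \<omega>)) borel (\<lambda>\<omega>. g (innov_past eps s' \<omega>))"
proof -
  define I where "I s = {s - int L <.. s}" for s
  define window where "window s \<omega> = restrict (\<lambda>i. eps i \<omega>) (I s)" for s \<omega>
  define extend where "extend s r = (\<lambda>l. if l < L then r (s - int l) else 0 :: real)" for s r
  have "I s \<inter> I s' = {}"
    using \<open>s' + int L \<le> s\<close> by (auto simp: I_def)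
  then have "indep_var (PiM (I s) (\<lambda>_. borel)) (window s) (PiM (I s') (\<lambda>_. borel)) (window s')"
    unfolding window_def by (rule indep_var_restrict[OF indep_eps]) auto
  moreover have "extend r \<in> measurable (PiM (I r) (\<lambda>_. borel)) (PiM UNIV (\<lambda>_. borel))" for r
    unfolding extend_def
  proof (rule measurable_PiM_single')
    fix l
    show "(\<lambda>\<omega>. if l < L then \<omega> (r - int l) else 0) \<in> borel_measurable (PiM (I r) (\<lambda>_. borel))"
      by (cases "l < L") (auto simp: I_def)
  qed auto
  ultimately have "indep_var borel (f \<circ> extend s \<circ> window s) borel (g \<circ> extend s' \<circ> window s')"
    unfolding comp_assoc by (intro indep_var_compose) auto
  moreover have "f \<circ> extend s \<circ> window s = (\<lambda>\<omega>. f (innov_past eps s \<omega>))"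
    "g \<circ> extend s' \<circ> window s' = (\<lambda>\<omega>. g (innov_past eps s' \<omega>))"
    unfolding comp_def
    by (intro ext local; simp add: extend_def window_def innov_past_def I_def)+
  ultimately show ?thesis
    by simp
qed

end

locale causal_linear_process = iid_innovations +
  fixes a :: "nat \<Rightarrow> real" and Y :: "int \<Rightarrow> 'a \<Rightarrow> real"
  assumes measurable_Y[measurable]: "\<And>s. Y s \<in> borel_measurable M"
    and Y_sums: "\<And>s. AE \<omega> in M. (\<lambda>i. a i * eps (s - int i) \<omega>) sums Y s \<omega>"
begin

lemma measurable_Y_past[measurable]: "(\<lambda>\<omega> j. Y (s - int j) \<omega>) \<in> measurable M (PiM UNIV (\<lambda>_. borel))"
  by (rule measurable_PiM_single') auto

lemma measurable_lin_pred[measurable]: "lin_pred d c Y s \<in> borel_measurable M"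
  unfolding lin_pred_def by measurable

lemma AE_Y_sums: "AE \<omega> in M. \<forall>s. (\<lambda>i. a i * eps (s - int i) \<omega>) sums Y s \<omega>"
  using Y_sums by (simp add: AE_all_countable)

lemma sums_innov_past:
  assumes "\<forall>s. (\<lambda>i. a i * eps (s - int i) \<omega>) sums Y s \<omega>"
  shows "(\<lambda>i. a i * innov_past eps s \<omega> (i + j)) sums Y (s - int j) \<omega>"
  using assms[rule_format, of "s - int j"] by (simp add: innov_past_def algebra_simps)

lemma ma_past_innov_past:
  assumes "\<forall>s. (\<lambda>i. a i * eps (s - int i) \<omega>) sums Y s \<omega>"
  shows "ma_past a (innov_past eps s \<omega>) = (\<lambda>j. Y (s - int j) \<omega>)"
  using sums_innov_past[OF assms] by (auto simp: ma_past_def sums_iff)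

lemma tendsto_ma_past_trunc:
  assumes "\<forall>s. (\<lambda>i. a i * eps (s - int i) \<omega>) sums Y s \<omega>"
  shows "(\<lambda>m. ma_past_trunc a m (innov_past eps s \<omega>) j) \<longlonglongrightarrow> Y (s - int j) \<omega>"
  using sums_innov_past[OF assms] by (simp add: ma_past_trunc_def sums_def)

lemma expectation_past_stationary:
  fixes g :: "(nat \<Rightarrow> real) \<Rightarrow> real"
  assumes [measurable]: "g \<in> borel_measurable (PiM UNIV (\<lambda>_. borel))"
  shows "expectation (\<lambda>\<omega>. g (\<lambda>j. Y (s - int j) \<omega>)) = expectation (\<lambda>\<omega>. g (\<lambda>j. Y (s' - int j) \<omega>))"
proof -
  have "expectation (\<lambda>\<omega>. g (\<lambda>j. Y (r - int j) \<omega>)) = integral\<^sup>L innov_law (\<lambda>w. g (ma_past a w))" for r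
  proof -
    have "expectation (\<lambda>\<omega>. g (\<lambda>j. Y (r - int j) \<omega>)) = expectation (\<lambda>\<omega>. g (ma_past a (innov_past eps r \<omega>)))"
      using AE_Y_sums measurable_compose[OF measurable_Y_past assms]
      by (intro integral_cong_AE) (auto simp: ma_past_innov_past)
    also have "\<dots> = integral\<^sup>L innov_law (\<lambda>w. g (ma_past a w))"
      by (rule integral_innov_past) measurable
    finally show ?thesis .
  qed
  then show ?thesis
    by simp
qed

definition lin_pred_cdf :: "nat \<Rightarrow> (nat \<Rightarrow> real) \<Rightarrow> int \<Rightarrow> real \<Rightarrow> real" where
  "lin_pred_cdf d c s y = prob {\<omega> \<in> space M. lin_pred d c Y s \<omega> \<le> y}"

lemma continuous_lin_pred_cdf:
  assumes "\<And>y. prob {\<omega> \<in> space M. lin_pred d c Y s \<omega> = y} = 0"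
  shows "continuous_on UNIV (lin_pred_cdf d c s)"
  unfolding lin_pred_cdf_def using assms by (intro continuous_prob_le_of_no_atoms) auto

lemma lin_pred_innov_past:
  assumes "\<forall>s. (\<lambda>i. a i * eps (s - int i) \<omega>) sums Y s \<omega>"
  shows "lin_pred d c Y s \<omega> = (\<Sum>j<d. c j * ma_past a (innov_past eps s \<omega>) j)"
  using assms by (simp add: lin_pred_def ma_past_innov_past)

lemma trunc_indicator_L1_tendsto_zero:
  assumes no_atom: "prob {\<omega> \<in> space M. lin_pred d c Y s \<omega> = y} = 0"
  shows "(\<lambda>m. expectation (\<lambda>\<omega>. \<bar>of_bool ((\<Sum>j<d. c j * ma_past a (innov_past eps s \<omega>) j) \<le> y)
    - of_bool ((\<Sum>j<d. c j * ma_past_trunc a m (innov_past eps s \<omega>) j) \<le> y)\<bar> :: real)) \<longlonglongrightarrow> 0"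
proof -
  have "AE \<omega> in M. lin_pred d c Y s \<omega> \<noteq> y"
    using no_atom by (intro AE_I[where N="{\<omega> \<in> space M. lin_pred d c Y s \<omega> = y}"])
      (auto simp: emeasure_eq_measure lin_pred_def)
  with AE_Y_sums have "AE \<omega> in M. (\<lambda>m. \<bar>of_bool ((\<Sum>j<d. c j * ma_past a (innov_past eps s \<omega>) j) \<le> y)
    - of_bool ((\<Sum>j<d. c j * ma_past_trunc a m (innov_past eps s \<omega>) j) \<le> y)\<bar> :: real) \<longlonglongrightarrow> 0"
  proof eventually_elim
    case (elim \<omega>)
    let ?V = "\<Sum>j<d. c j * ma_past a (innov_past eps s \<omega>) j"
    have "(\<lambda>m. \<Sum>j<d. c j * ma_past_trunc a m (innov_past eps s \<omega>) j) \<longlonglongrightarrow> ?V"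
      unfolding ma_past_innov_past[OF elim(1)] by (intro tendsto_intros tendsto_ma_past_trunc elim(1))
    moreover have "?V \<noteq> y"
      using elim(2) lin_pred_innov_past[OF elim(1)] by simp
    ultimately have "(\<lambda>m. of_bool ((\<Sum>j<d. c j * ma_past_trunc a m (innov_past eps s \<omega>) j) \<le> y) :: real)
        \<longlonglongrightarrow> of_bool (?V \<le> y)"
      by (rule tendsto_of_bool_le)
    from tendsto_diff[OF tendsto_const[of "of_bool (?V \<le> y)"] this] show ?case
      by (intro tendsto_rabs_zero) simp
  qed
  then have "(\<lambda>m. expectation (\<lambda>\<omega>. \<bar>of_bool ((\<Sum>j<d. c j * ma_past a (innov_past eps s \<omega>) j) \<le> y)
    - of_bool ((\<Sum>j<d. c j * ma_past_trunc a m (innov_past eps s \<omega>) j) \<le> y)\<bar> :: real)) \<longlonglongrightarrow> expectation (\<lambda>_. 0)"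
    by (intro integral_dominated_convergence[where w="\<lambda>_. 1"]) auto
  then show ?thesis
    by simp
qed

lemma indep_var_trunc_indicator:
  assumes "s' + int (m + d) \<le> s"
  shows "indep_var
    borel (\<lambda>\<omega>. of_bool ((\<Sum>j<d. c j * ma_past_trunc a m (innov_past eps s \<omega>) j) \<le> y) :: real)
    borel (\<lambda>\<omega>. of_bool ((\<Sum>j<d. c j * ma_past_trunc a m (innov_past eps s' \<omega>) j) \<le> y) :: real)"
proof -
  let ?f = "\<lambda>w. of_bool ((\<Sum>j<d. c j * ma_past_trunc a m w j) \<le> y) :: real"
  have local: "?f w = ?f w'" if "\<And>l. l < m + d \<Longrightarrow> w l = w' l" for w w'
  proof -
    have "(\<Sum>j<d. c j * ma_past_trunc a m w j) = (\<Sum>j<d. c j * ma_past_trunc a m w' j)"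
      unfolding ma_past_trunc_def using that by (intro sum.cong refl arg_cong2[where f="(*)"]) simp_all
    then show ?thesis
      by simp
  qed
  show ?thesis
    by (rule indep_var_innov_past_local[where L="m + d", OF _ _ local local]) (measurable, measurable, fact)
qed

lemma empirical_cdf_conv_prob:
  assumes no_atom: "prob {\<omega> \<in> space M. lin_pred d c Y t \<omega> = y} = 0"
  shows "conv_prob M (\<lambda>N \<omega>. empirical_cdf N (\<lambda>k. lin_pred d c Y (t - int k) \<omega>) y) (\<lambda>_. lin_pred_cdf d c t y)"
proof -
  define V where "V w = (\<Sum>j<d. c j * ma_past a w j)" for w
  define Vm where "Vm m w = (\<Sum>j<d. c j * ma_past_trunc a m w j)" for m w
  define X :: "nat \<Rightarrow> 'a \<Rightarrow> real" where "X k \<omega> = of_bool (V (innov_past eps (t - int k) \<omega>) \<le> y)" for k \<omega>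
  define Xm :: "nat \<Rightarrow> nat \<Rightarrow> 'a \<Rightarrow> real" where "Xm m k \<omega> = of_bool (Vm m (innov_past eps (t - int k) \<omega>) \<le> y)" for m k \<omega>
  define e where "e m = expectation (\<lambda>\<omega>. \<bar>X 0 \<omega> - Xm m 0 \<omega>\<bar>)" for m
  have [measurable]: "V \<in> borel_measurable (PiM UNIV (\<lambda>_. borel))"
    "Vm m \<in> borel_measurable (PiM UNIV (\<lambda>_. borel))" for m
    unfolding V_def Vm_def by measurable
  have [measurable]: "X k \<in> borel_measurable M" "Xm m k \<in> borel_measurable M" for m k
    unfolding X_def Xm_def by measurable
  have "expectation (X k) = integral\<^sup>L innov_law (\<lambda>w. of_bool (V w \<le> y))" for k
    unfolding X_def by (rule integral_innov_past) measurable
  then have mean: "expectation (X k) = expectation (X 0)" for k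
    by simp
  have "expectation (\<lambda>\<omega>. \<bar>X k \<omega> - Xm m k \<omega>\<bar>)
      = integral\<^sup>L innov_law (\<lambda>w. \<bar>of_bool (V w \<le> y) - of_bool (Vm m w \<le> y)\<bar> :: real)" for m k
    unfolding X_def Xm_def by (rule integral_innov_past) measurable
  then have approx: "expectation (\<lambda>\<omega>. \<bar>X k \<omega> - Xm m k \<omega>\<bar>) = e m" for m k
    by (simp add: e_def)
  have "e \<longlonglongrightarrow> 0"
    using trunc_indicator_L1_tendsto_zero[OF no_atom] by (simp add: e_def[abs_def] X_def Xm_def V_def Vm_def)
  have uncorr: "expectation (\<lambda>\<omega>. Xm m k \<omega> * Xm m k' \<omega>) = expectation (Xm m k) * expectation (Xm m k')"
    if "k + (m + d) \<le> k'" for m k k'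
    using indep_var_trunc_indicator[where s'="t - int k'" and s="t - int k"] that unfolding Xm_def Vm_def
    by (intro indep_var_lebesgue_integral) (auto intro!: integrable_unit_interval)
  have "conv_prob M (\<lambda>N \<omega>. (\<Sum>k<N. X k \<omega>) / real N) (\<lambda>_. expectation (X 0))"
  proof (rule sample_mean_conv_prob_of_approx_dependent[where Xm=Xm and L="\<lambda>m. m + d"])
    show "X k \<omega> \<in> {0..1} \<and> Xm m k \<omega> \<in> {0..1}" for m k \<omega>
      by (simp add: X_def Xm_def)
  qed (use mean approx \<open>e \<longlonglongrightarrow> 0\<close> uncorr in auto)
  moreover have "expectation (X 0) = lin_pred_cdf d c t y"
  proof -
    have "expectation (X 0) = expectation (indicator {\<omega> \<in> space M. lin_pred d c Y t \<omega> \<le> y})"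
      using AE_Y_sums by (intro integral_cong_AE) (auto simp: X_def V_def simp flip: lin_pred_innov_past)
    then show ?thesis
      by (simp add: lin_pred_cdf_def Int_absorb2 Collect_restrict)
  qed
  moreover have "AE \<omega> in M. \<forall>N. (\<Sum>k<N. X k \<omega>) / real N = empirical_cdf N (\<lambda>k. lin_pred d c Y (t - int k) \<omega>) y"
    using AE_Y_sums by eventually_elim (simp add: X_def V_def empirical_cdf_def lin_pred_innov_past)
  ultimately show ?thesis
    by (subst (asm) conv_prob_cong_AE) (auto simp: empirical_cdf_def lin_pred_def)
qed

lemma prob_exceed_fraction_le:
  assumes "0 < e"
  shows "prob {\<omega> \<in> space M. e \<le> (\<Sum>k<N. of_bool (R < (\<Sum>i<d. \<bar>Y (t - int k - int i) \<omega>\<bar>))) / real N}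
    \<le> prob {\<omega> \<in> space M. R < (\<Sum>i<d. \<bar>Y (t - int i) \<omega>\<bar>)} / e"
proof -
  define p where "p = prob {\<omega> \<in> space M. R < (\<Sum>i<d. \<bar>Y (t - int i) \<omega>\<bar>)}"
  define T where "T \<omega> = (\<Sum>k<N. of_bool (R < (\<Sum>i<d. \<bar>Y (t - int k - int i) \<omega>\<bar>))) / real N" for \<omega>
  have [measurable]: "T \<in> borel_measurable M"
    unfolding T_def by measurable
  have int_T: "integrable M T"
    unfolding T_def by (intro integrable_divide_zero Bochner_Integration.integrable_sum integrable_unit_interval) auto
  have T_nonneg: "0 \<le> T \<omega>" for \<omega>
    unfolding T_def by (intro divide_nonneg_nonneg sum_nonneg) auto
  have "expectation (\<lambda>\<omega>. of_bool (R < (\<Sum>i<d. \<bar>Y (t - int k - int i) \<omega>\<bar>)) :: real) = p" for k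
  proof -
    have "expectation (\<lambda>\<omega>. of_bool (R < (\<Sum>i<d. \<bar>Y (t - int k - int i) \<omega>\<bar>)) :: real)
        = expectation (\<lambda>\<omega>. of_bool (R < (\<Sum>i<d. \<bar>Y (t - int i) \<omega>\<bar>)))"
      using expectation_past_stationary[where g="\<lambda>z. of_bool (R < (\<Sum>i<d. \<bar>z i\<bar>))" and s="t - int k" and s'=t]
      by simp
    also have "\<dots> = expectation (indicator {\<omega> \<in> space M. R < (\<Sum>i<d. \<bar>Y (t - int i) \<omega>\<bar>)})"
      by (intro Bochner_Integration.integral_cong) (auto simp: indicator_def)
    also have "\<dots> = p"
      by (simp add: p_def Int_absorb2 Collect_restrict)
    finally show ?thesis .
  qed
  moreover have "expectation T = (\<Sum>k<N. expectation (\<lambda>\<omega>. of_bool (R < (\<Sum>i<d. \<bar>Y (t - int k - int i) \<omega>\<bar>)) :: real)) / real N"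
    unfolding T_def integral_divide_zero
    by (rule arg_cong[where f="\<lambda>x. x / real N"], rule Bochner_Integration.integral_sum)
      (auto intro: integrable_unit_interval)
  ultimately have "expectation T = real N * p / real N"
    by simp
  also have "\<dots> \<le> p"
    using measure_nonneg[of M] by (cases "N = 0") (auto simp: p_def)
  finally have ET: "expectation T \<le> p" .
  have "prob {\<omega> \<in> space M. e \<le> T \<omega>} \<le> expectation T / e"
    using \<open>0 < e\<close> int_T T_nonneg
    by (intro integral_Markov_inequality_measure[where A="space M"]) auto
  also have "\<dots> \<le> p / e"
    using ET \<open>0 < e\<close> by (simp add: divide_right_mono)
  finally show ?thesis
    by (simp add: T_def p_def)
qed

lemma prob_rank_deviation_le:
  fixes ch :: "'a \<Rightarrow> nat \<Rightarrow> real" and F :: "real \<Rightarrow> real" and N :: nat and K R :: real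
  assumes [measurable]: "\<And>i. (\<lambda>\<omega>. ch \<omega> i) \<in> borel_measurable M"
    and "0 < e" "0 \<le> \<eta>" "2 * \<eta> * R \<le> r" "0 \<le> r" "r \<le> 1"
    and F_near: "\<And>x x'. x \<in> {-K-1..K+1} \<Longrightarrow> x' \<in> {-K-1..K+1} \<Longrightarrow> \<bar>x - x'\<bar> \<le> r \<Longrightarrow> \<bar>F x - F x'\<bar> \<le> e"
    and "finite G"
    and grid: "\<And>H y. mono H \<Longrightarrow> (\<forall>z\<in>G. \<bar>H z - F z\<bar> \<le> e) \<Longrightarrow> y \<in> {-K-1..K+1} \<Longrightarrow> \<bar>H y - F y\<bar> \<le> 2 * e"
  shows "prob {\<omega> \<in> space M. 4 * e < \<bar>empirical_cdf N (\<lambda>k. lin_pred d (ch \<omega>) Y (t - int k) \<omega>)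
        (lin_pred d (ch \<omega>) Y t \<omega>) - F (lin_pred d c Y t \<omega>)\<bar>}
    \<le> prob {\<omega> \<in> space M. \<eta> < (\<Sum>i<d. \<bar>ch \<omega> i - c i\<bar>)}
      + prob {\<omega> \<in> space M. R < (\<Sum>i<d. \<bar>Y (t - int i) \<omega>\<bar>)} * (1 + 1 / e)
      + prob {\<omega> \<in> space M. K < \<bar>lin_pred d c Y t \<omega>\<bar>}
      + (\<Sum>y\<in>G. prob {\<omega> \<in> space M. e < \<bar>empirical_cdf N (\<lambda>k. lin_pred d c Y (t - int k) \<omega>) y - F y\<bar>})"
proof -
  define A where "A \<omega> k = (\<Sum>i<d. \<bar>Y (t - int k - int i) \<omega>\<bar>)" for \<omega> k
  define B1 where "B1 = {\<omega> \<in> space M. \<eta> < (\<Sum>i<d. \<bar>ch \<omega> i - c i\<bar>)}"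
  define B2 where "B2 = {\<omega> \<in> space M. R < (\<Sum>i<d. \<bar>Y (t - int i) \<omega>\<bar>)}"
  define B3 where "B3 = {\<omega> \<in> space M. K < \<bar>lin_pred d c Y t \<omega>\<bar>}"
  define B4 where "B4 = {\<omega> \<in> space M. e \<le> (\<Sum>k<N. of_bool (R < A \<omega> k)) / real N}"
  define B5 where "B5 y = {\<omega> \<in> space M. e < \<bar>empirical_cdf N (\<lambda>k. lin_pred d c Y (t - int k) \<omega>) y - F y\<bar>}" for y
  have sets: "B1 \<in> sets M" "B2 \<in> sets M" "B3 \<in> sets M" "B4 \<in> sets M" "B5 y \<in> sets M" for y
    unfolding B1_def B2_def B3_def B4_def B5_def A_def empirical_cdf_def lin_pred_def by measurable
  have "{\<omega> \<in> space M. 4 * e < \<bar>empirical_cdf N (\<lambda>k. lin_pred d (ch \<omega>) Y (t - int k) \<omega>)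
        (lin_pred d (ch \<omega>) Y t \<omega>) - F (lin_pred d c Y t \<omega>)\<bar>}
      \<subseteq> B1 \<union> B2 \<union> B3 \<union> B4 \<union> (\<Union>y\<in>G. B5 y)"
  proof (rule subsetI, rule ccontr)
    fix \<omega> assume \<omega>: "\<omega> \<in> {\<omega> \<in> space M. 4 * e < \<bar>empirical_cdf N (\<lambda>k. lin_pred d (ch \<omega>) Y (t - int k) \<omega>)
        (lin_pred d (ch \<omega>) Y t \<omega>) - F (lin_pred d c Y t \<omega>)\<bar>}"
      and "\<omega> \<notin> B1 \<union> B2 \<union> B3 \<union> B4 \<union> (\<Union>y\<in>G. B5 y)"
    then have good: "(\<Sum>i<d. \<bar>ch \<omega> i - c i\<bar>) \<le> \<eta>" "A \<omega> 0 \<le> R" "\<bar>lin_pred d c Y t \<omega>\<bar> \<le> K"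
      "(\<Sum>k<N. of_bool (R < A \<omega> k)) / real N < e"
      "\<forall>y\<in>G. \<bar>empirical_cdf N (\<lambda>k. lin_pred d c Y (t - int k) \<omega>) y - F y\<bar> \<le> e"
      by (auto simp: B1_def B2_def B3_def B4_def B5_def A_def not_less)
    have "\<bar>empirical_cdf N (\<lambda>k. lin_pred d (ch \<omega>) Y (t - int k) \<omega>) (lin_pred d (ch \<omega>) Y (t - int 0) \<omega>)
        - F (lin_pred d c Y (t - int 0) \<omega>)\<bar> < 4 * e"
    proof (rule abs_empirical_rank_sub_cdf_less[where v="\<lambda>k. lin_pred d c Y (t - int k) \<omega>"
          and w="\<lambda>k. lin_pred d (ch \<omega>) Y (t - int k) \<omega>" and A="A \<omega>" and \<delta>="\<Sum>i<d. \<bar>ch \<omega> i - c i\<bar>"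
          and \<eta>=\<eta> and R=R and r=r and K=K])
      show "\<bar>lin_pred d (ch \<omega>) Y (t - int k) \<omega> - lin_pred d c Y (t - int k) \<omega>\<bar>
          \<le> (\<Sum>i<d. \<bar>ch \<omega> i - c i\<bar>) * A \<omega> k" for k
        unfolding A_def by (rule abs_lin_pred_diff_le)
      show "\<bar>empirical_cdf N (\<lambda>k. lin_pred d c Y (t - int k) \<omega>) x - F x\<bar> \<le> 2 * e"
        if "x \<in> {-K-1..K+1}" for x
        using that by (rule grid[OF mono_empirical_cdf good(5)])
    qed (use good(1-4) \<open>2 * \<eta> * R \<le> r\<close> \<open>0 \<le> r\<close> \<open>r \<le> 1\<close> F_near in \<open>simp_all add: A_def sum_nonneg\<close>)
    with \<omega> show False
      by simp
  qed
  then have "prob {\<omega> \<in> space M. 4 * e < \<bar>empirical_cdf N (\<lambda>k. lin_pred d (ch \<omega>) Y (t - int k) \<omega>)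
        (lin_pred d (ch \<omega>) Y t \<omega>) - F (lin_pred d c Y t \<omega>)\<bar>}
      \<le> prob (B1 \<union> B2 \<union> B3 \<union> B4 \<union> (\<Union>y\<in>G. B5 y))"
    using sets \<open>finite G\<close> by (intro finite_measure_mono) auto
  also have "\<dots> \<le> prob B1 + prob B2 + prob B3 + prob B4 + (\<Sum>y\<in>G. prob (B5 y))"
  proof -
    have "prob (\<Union>y\<in>G. B5 y) \<le> (\<Sum>y\<in>G. prob (B5 y))"
      using sets \<open>finite G\<close> by (intro measure_UNION_le) auto
    moreover have "prob (B1 \<union> B2 \<union> B3 \<union> B4 \<union> (\<Union>y\<in>G. B5 y)) \<le> prob (B1 \<union> B2 \<union> B3 \<union> B4) + prob (\<Union>y\<in>G. B5 y)"
      "prob (B1 \<union> B2 \<union> B3 \<union> B4) \<le> prob (B1 \<union> B2 \<union> B3) + prob B4"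
      "prob (B1 \<union> B2 \<union> B3) \<le> prob (B1 \<union> B2) + prob B3"
      "prob (B1 \<union> B2) \<le> prob B1 + prob B2"
      using sets \<open>finite G\<close> by (intro measure_Un_le; auto)+
    ultimately show ?thesis
      by linarith
  qed
  also have "prob B4 \<le> prob B2 / e"
    unfolding B4_def B2_def A_def by (rule prob_exceed_fraction_le[OF \<open>0 < e\<close>])
  finally show ?thesis
    by (simp add: B1_def B2_def B3_def B5_def algebra_simps)
qed

lemma prob_rank_deviation_small:
  assumes no_atom: "\<And>y. prob {\<omega> \<in> space M. lin_pred d c Y t \<omega> = y} = 0" and "0 < e" "0 < \<zeta>"
  obtains \<eta> G where "0 < \<eta>" "finite G"
    "\<And>ch N. (\<And>i. (\<lambda>\<omega>. ch \<omega> i) \<in> borel_measurable M) \<Longrightarrow>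
      prob {\<omega> \<in> space M. 4 * e < \<bar>empirical_cdf N (\<lambda>k. lin_pred d (ch \<omega>) Y (t - int k) \<omega>)
        (lin_pred d (ch \<omega>) Y t \<omega>) - lin_pred_cdf d c t (lin_pred d c Y t \<omega>)\<bar>}
      \<le> \<zeta> + prob {\<omega> \<in> space M. \<eta> < (\<Sum>i<d. \<bar>ch \<omega> i - c i\<bar>)}
        + (\<Sum>y\<in>G. prob {\<omega> \<in> space M.
            e < \<bar>empirical_cdf N (\<lambda>k. lin_pred d c Y (t - int k) \<omega>) y - lin_pred_cdf d c t y\<bar>})"
proof -
  define F where "F = lin_pred_cdf d c t"
  obtain R :: nat
    where R: "prob {\<omega> \<in> space M. real R < (\<Sum>i<d. \<bar>Y (t - int i) \<omega>\<bar>)} < \<zeta> / 2 / (1 + 1 / e)"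
    by (rule tail_prob_less[of "\<lambda>\<omega>. \<Sum>i<d. \<bar>Y (t - int i) \<omega>\<bar>" "\<zeta> / 2 / (1 + 1 / e)"])
      (measurable, use \<open>0 < e\<close> \<open>0 < \<zeta>\<close> in \<open>simp add: add_pos_pos\<close>)
  obtain K :: nat where K: "prob {\<omega> \<in> space M. real K < \<bar>lin_pred d c Y t \<omega>\<bar>} < \<zeta> / 2"
    by (rule tail_prob_less[of "\<lambda>\<omega>. \<bar>lin_pred d c Y t \<omega>\<bar>" "\<zeta> / 2"]) (measurable, use \<open>0 < \<zeta>\<close> in simp)
  define I where "I = {- real K - 1 .. real K + 1}"
  have "continuous_on I F"
    unfolding F_def using continuous_lin_pred_cdf[OF no_atom] by (rule continuous_on_subset) simp
  then obtain \<rho> where \<rho>: "0 < \<rho>" "\<rho> \<le> 1"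
    and F_near: "\<And>x x'. x \<in> I \<Longrightarrow> x' \<in> I \<Longrightarrow> \<bar>x - x'\<bar> \<le> \<rho> \<Longrightarrow> \<bar>F x - F x'\<bar> \<le> e"
    using \<open>0 < e\<close> unfolding I_def by (rule uniform_modulus_of_continuous_on_Icc) blast
  have "- real K - 1 \<le> real K + 1"
    by simp
  with \<open>continuous_on I F\<close> obtain G where "finite G" "G \<subseteq> I"
    and grid: "\<And>H y. mono H \<Longrightarrow> (\<forall>z\<in>G. \<bar>H z - F z\<bar> \<le> e) \<Longrightarrow> y \<in> I \<Longrightarrow> \<bar>H y - F y\<bar> \<le> 2 * e"
    using \<open>0 < e\<close> unfolding I_def by (rule uniform_approx_of_finite_grid) blast
  define \<eta> where "\<eta> = \<rho> / (2 * real R + 1)"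
  have "0 < \<eta>" "2 * \<eta> * real R \<le> \<rho>"
    using \<rho> by (auto simp: \<eta>_def field_simps)
  show thesis
  proof (rule that[OF \<open>0 < \<eta>\<close> \<open>finite G\<close>])
    fix ch :: "'a \<Rightarrow> nat \<Rightarrow> real" and N
    assume [measurable]: "\<And>i. (\<lambda>\<omega>. ch \<omega> i) \<in> borel_measurable M"
    have "prob {\<omega> \<in> space M. 4 * e < \<bar>empirical_cdf N (\<lambda>k. lin_pred d (ch \<omega>) Y (t - int k) \<omega>)
        (lin_pred d (ch \<omega>) Y t \<omega>) - F (lin_pred d c Y t \<omega>)\<bar>}
      \<le> prob {\<omega> \<in> space M. \<eta> < (\<Sum>i<d. \<bar>ch \<omega> i - c i\<bar>)}
        + prob {\<omega> \<in> space M. real R < (\<Sum>i<d. \<bar>Y (t - int i) \<omega>\<bar>)} * (1 + 1 / e)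
        + prob {\<omega> \<in> space M. real K < \<bar>lin_pred d c Y t \<omega>\<bar>}
        + (\<Sum>y\<in>G. prob {\<omega> \<in> space M.
            e < \<bar>empirical_cdf N (\<lambda>k. lin_pred d c Y (t - int k) \<omega>) y - F y\<bar>})"
    proof (rule prob_rank_deviation_le)
      show "\<bar>F x - F x'\<bar> \<le> e"
        if "x \<in> {- real K - 1..real K + 1}" "x' \<in> {- real K - 1..real K + 1}" "\<bar>x - x'\<bar> \<le> \<rho>" for x x'
        using that unfolding I_def[symmetric] by (rule F_near)
      show "\<bar>H y - F y\<bar> \<le> 2 * e"
        if "mono H" "\<forall>z\<in>G. \<bar>H z - F z\<bar> \<le> e" "y \<in> {- real K - 1..real K + 1}" for H y
        using that unfolding I_def[symmetric] by (rule grid)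
    qed (use \<open>0 < e\<close> \<open>0 < \<eta>\<close> \<rho> \<open>2 * \<eta> * real R \<le> \<rho>\<close> \<open>finite G\<close> in auto)
    moreover have "prob {\<omega> \<in> space M. real R < (\<Sum>i<d. \<bar>Y (t - int i) \<omega>\<bar>)} * (1 + 1 / e) < \<zeta> / 2"
      using \<open>0 < e\<close> by (intro pos_less_divide_eq[THEN iffD1, OF _ R]) (simp add: add_pos_pos)
    ultimately show "prob {\<omega> \<in> space M. 4 * e < \<bar>empirical_cdf N (\<lambda>k. lin_pred d (ch \<omega>) Y (t - int k) \<omega>)
        (lin_pred d (ch \<omega>) Y t \<omega>) - lin_pred_cdf d c t (lin_pred d c Y t \<omega>)\<bar>}
      \<le> \<zeta> + prob {\<omega> \<in> space M. \<eta> < (\<Sum>i<d. \<bar>ch \<omega> i - c i\<bar>)}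
        + (\<Sum>y\<in>G. prob {\<omega> \<in> space M.
            e < \<bar>empirical_cdf N (\<lambda>k. lin_pred d c Y (t - int k) \<omega>) y - lin_pred_cdf d c t y\<bar>})"
      using K unfolding F_def by linarith
  qed
qed

lemma rank_conv_prob:
  fixes chat :: "nat \<Rightarrow> 'a \<Rightarrow> nat \<Rightarrow> real" and N :: "nat \<Rightarrow> nat"
  assumes [measurable]: "\<And>n i. (\<lambda>\<omega>. chat n \<omega> i) \<in> borel_measurable M"
    and chat_conv: "\<And>\<eta>. 0 < \<eta> \<Longrightarrow> (\<lambda>n. prob {\<omega> \<in> space M. \<eta> < (\<Sum>i<d. \<bar>chat n \<omega> i - c i\<bar>)}) \<longlonglongrightarrow> 0"
    and N: "filterlim N at_top sequentially"
    and no_atom: "\<And>y. prob {\<omega> \<in> space M. lin_pred d c Y t \<omega> = y} = 0"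
  shows "conv_prob M
    (\<lambda>n \<omega>. empirical_cdf (N n) (\<lambda>k. lin_pred d (chat n \<omega>) Y (t - int k) \<omega>) (lin_pred d (chat n \<omega>) Y t \<omega>))
    (\<lambda>\<omega>. lin_pred_cdf d c t (lin_pred d c Y t \<omega>))"
  unfolding conv_prob_def
proof (intro allI impI tendsto_zero_if_eventually_le_small)
  fix \<epsilon> \<zeta> :: real assume "0 < \<epsilon>" "0 < \<zeta>"
  obtain \<eta> G where "0 < \<eta>" "finite G"
    and bound: "\<And>ch N. (\<And>i. (\<lambda>\<omega>. ch \<omega> i) \<in> borel_measurable M) \<Longrightarrow>
      prob {\<omega> \<in> space M. 4 * (\<epsilon> / 4) < \<bar>empirical_cdf N (\<lambda>k. lin_pred d (ch \<omega>) Y (t - int k) \<omega>)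
        (lin_pred d (ch \<omega>) Y t \<omega>) - lin_pred_cdf d c t (lin_pred d c Y t \<omega>)\<bar>}
      \<le> \<zeta> + prob {\<omega> \<in> space M. \<eta> < (\<Sum>i<d. \<bar>ch \<omega> i - c i\<bar>)}
        + (\<Sum>y\<in>G. prob {\<omega> \<in> space M.
            \<epsilon> / 4 < \<bar>empirical_cdf N (\<lambda>k. lin_pred d c Y (t - int k) \<omega>) y - lin_pred_cdf d c t y\<bar>})"
    by (rule prob_rank_deviation_small[where e="\<epsilon> / 4" and \<zeta>=\<zeta>, OF no_atom])
      (use \<open>0 < \<epsilon>\<close> \<open>0 < \<zeta>\<close> in simp_all)
  define b where "b n = prob {\<omega> \<in> space M. \<eta> < (\<Sum>i<d. \<bar>chat n \<omega> i - c i\<bar>)}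
    + (\<Sum>y\<in>G. prob {\<omega> \<in> space M.
        \<epsilon> / 4 < \<bar>empirical_cdf (N n) (\<lambda>k. lin_pred d c Y (t - int k) \<omega>) y - lin_pred_cdf d c t y\<bar>})" for n
  have "b \<longlonglongrightarrow> 0 + 0"
    unfolding b_def
  proof (intro tendsto_add chat_conv[OF \<open>0 < \<eta>\<close>] tendsto_null_sum)
    fix y
    show "(\<lambda>n. prob {\<omega> \<in> space M.
        \<epsilon> / 4 < \<bar>empirical_cdf (N n) (\<lambda>k. lin_pred d c Y (t - int k) \<omega>) y - lin_pred_cdf d c t y\<bar>}) \<longlonglongrightarrow> 0"
      using \<open>0 < \<epsilon>\<close>
      by (intro filterlim_compose[OF _ N] empirical_cdf_conv_prob[OF no_atom, unfolded conv_prob_def, rule_format])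
        simp
  qed
  moreover have "measure M {\<omega> \<in> space M. \<epsilon> < \<bar>empirical_cdf (N n) (\<lambda>k. lin_pred d (chat n \<omega>) Y (t - int k) \<omega>)
      (lin_pred d (chat n \<omega>) Y t \<omega>) - lin_pred_cdf d c t (lin_pred d c Y t \<omega>)\<bar>} \<le> \<zeta> + b n" for n
    using bound[of "chat n" "N n"] by (simp add: b_def algebra_simps)
  ultimately show "\<exists>b. b \<longlonglongrightarrow> 0 \<and> (\<forall>\<^sub>F n in sequentially.
      measure M {\<omega> \<in> space M. \<epsilon> < \<bar>empirical_cdf (N n) (\<lambda>k. lin_pred d (chat n \<omega>) Y (t - int k) \<omega>)
        (lin_pred d (chat n \<omega>) Y t \<omega>) - lin_pred_cdf d c t (lin_pred d c Y t \<omega>)\<bar>} \<le> \<zeta> + b n)"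
    by (intro exI[of _ b]) auto
qed simp

end

lemma U_hat_eq_empirical_cdf:
  "U_hat d h phihat Y t n \<omega> = empirical_cdf (Suc (n - d))
     (\<lambda>k. lin_pred d (pred_coef d (phihat n \<omega>) h) Y (t - int k) \<omega>) (lin_pred d (pred_coef d (phihat n \<omega>) h) Y t \<omega>)"
  unfolding U_hat_def empirical_cdf_def of_bool_def
  by (simp add: atLeast0AtMost lessThan_Suc_atMost[symmetric])

lemma U_star_eq_prob_le:
  assumes "\<And>s. Y s \<in> borel_measurable M"
  shows "U_star M d h phi Y t \<omega> = measure M {\<omega>' \<in> space M.
    lin_pred d (pred_coef d phi h) Y t \<omega>' \<le> lin_pred d (pred_coef d phi h) Y t \<omega>}"
proof -
  let ?Z = "\<lambda>\<omega>'. \<lambda>i\<in>{..<d}. Y (t - int i) \<omega>'"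
  have [measurable]: "?Z \<in> measurable M (PiM {..<d} (\<lambda>_. borel))"
    using assms by measurable
  show ?thesis
    unfolding U_star_def
    by (subst measure_distr) (auto intro!: arg_cong[where f="measure M"] simp: lin_pred_def space_PiM)
qed

theorem proposition1:
  fixes M :: "'a measure" and eps Y :: "int \<Rightarrow> 'a \<Rightarrow> real"
    and phi :: "nat \<Rightarrow> real" and phihat :: "nat \<Rightarrow> 'a \<Rightarrow> nat \<Rightarrow> real"
    and d h :: nat and t :: int
  assumes P: "prob_space M"
    and d: "d \<ge> 1"
    and roots: "\<forall>z::complex. cmod z \<le> 1 \<longrightarrow>
                  1 - (\<Sum>i<d. complex_of_real (phi i) * z ^ Suc i) \<noteq> 0"
    and indep: "prob_space.indep_vars M (\<lambda>_. borel) eps UNIV"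
    and ident: "\<forall>s. distr M borel (eps s) = distr M borel (eps 0)"
    and dens: "\<exists>f. distributed M lborel (eps 0) f"
    and moment: "\<exists>\<delta>>0. integrable M (\<lambda>\<omega>. \<bar>eps 0 \<omega>\<bar> powr \<delta>)"
    and Y_meas: "\<forall>s. Y s \<in> borel_measurable M"
    and Y_MA: "\<forall>s. AE \<omega> in M. (\<lambda>i. ma_coef d phi i * eps (s - int i) \<omega>) sums Y s \<omega>"
    and Y_AR: "\<forall>s. AE \<omega> in M. Y s \<omega> = (\<Sum>i<d. phi i * Y (s - int (Suc i)) \<omega>) + eps s \<omega>"
    and past: "\<forall>s. prob_space.indep_set M
                     (sets (vimage_algebra (space M) (eps s) borel))
                     (sets (vimage_algebra (space M) (\<lambda>\<omega>. \<lambda>r\<in>{..s - 1}. Y r \<omega>)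
                              (PiM {..s - 1} (\<lambda>_. borel))))"
    and h: "h \<ge> 1"
    and est_meas: "\<forall>n i. (\<lambda>\<omega>. phihat n \<omega> i) \<in> borel_measurable M"
    and consistent: "conv_prob_vec M d phihat phi"
    and Yhat_dens: "\<exists>f. distributed M lborel (lin_pred d (pred_coef d phi h) Y t) f"
  shows "conv_prob M (U_hat d h phihat Y t) (U_star M d h phi Y t)"
proof -
  interpret causal_linear_process M eps "ma_coef d phi" Y
    using P indep ident Y_meas Y_MA
    by (simp add: causal_linear_process_def causal_linear_process_axioms_def
        iid_innovations_def iid_innovations_axioms_def)
  have [measurable]: "(\<lambda>\<omega>. phihat n \<omega> i) \<in> borel_measurable M" for n i
    using est_meas by blast
  have "conv_prob M
      (\<lambda>n \<omega>. empirical_cdf (Suc (n - d)) (\<lambda>k. lin_pred d (pred_coef d (phihat n \<omega>) h) Y (t - int k) \<omega>)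
        (lin_pred d (pred_coef d (phihat n \<omega>) h) Y t \<omega>))
      (\<lambda>\<omega>. lin_pred_cdf d (pred_coef d phi h) t (lin_pred d (pred_coef d phi h) Y t \<omega>))"
  proof (rule rank_conv_prob)
    show "(\<lambda>n. prob {\<omega> \<in> space M. \<eta> < (\<Sum>i<d. \<bar>pred_coef d (phihat n \<omega>) h i - pred_coef d phi h i\<bar>)}) \<longlonglongrightarrow> 0"
      if "0 < \<eta>" for \<eta>
      using est_meas consistent that by (intro conv_prob_pred_coef[OF P]) auto
    show "filterlim (\<lambda>n. Suc (n - d)) at_top sequentially"
      by (rule filterlim_compose[OF filterlim_Suc filterlim_minus_const_nat_at_top])
    show "prob {\<omega> \<in> space M. lin_pred d (pred_coef d phi h) Y t \<omega> = y} = 0" for y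
      using Yhat_dens prob_eq_zero_of_distributed by blast
  qed measurable
  moreover have "U_star M d h phi Y t = (\<lambda>\<omega>. lin_pred_cdf d (pred_coef d phi h) t (lin_pred d (pred_coef d phi h) Y t \<omega>))"
    unfolding lin_pred_cdf_def by (intro ext U_star_eq_prob_le) simp
  ultimately show ?thesis
    by (simp add: U_hat_eq_empirical_cdf[abs_def])
qed

end
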